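(* Let $F(X)=c_0+c_1X+\cdots+c_{d-1}X^{d-1}+X^d\in\mathbb{Z}[X]$ be a monic irreducible polynomial such that $L=\mathbb{Q}(\xi)$ is a Galois extension of $\mathbb{Q}$ of degree $d$, where $\xi$ is a fixed root of $F$, and let $G=\mathrm{Gal}(L/\mathbb{Q})$. Assume that $\{\sigma\xi\}_{\sigma\in G}$ is a $\mathbb{Q}$-basis of $L$ (a normal basis). Let $K_1,\dots,K_r$ be the conjugacy classes of $G$. Define the matrices $$P=[\sigma^{-1}(\xi^{i-1})]_{1\le i\le d,\ \sigma\in G},\qquad \Gamma_\xi=[\sigma\tau^{-1}(\xi)]_{\sigma\in G,\ \tau\in G},\qquad \kappa=[\kappa_{\tau,j}]_{\tau\in G,\ 1\le j\le r},$$ where $\kappa_{\tau,j}=1$ if $\tau\in K_j$ and $\kappa_{\tau,j}=0$ otherwise. Then $\Gamma_\xi$ is invertible, and the $d\times r$ matrix $A=P\,\Gamma_\xi^{-1}\,\kappa$ has rational entries. For each $j$, let $(a_{K_j,i})_{i\ge0}$ be the sequence with characteristic polynomial $F$ (i.e. $a_{K_j,n+d}=-\sum_{k=0}^{d-1}c_k a_{K_j,n+k}$ for all $n\ge 0$) whose first $d$ terms $a_{K_j,0},\dots,a_{K_j,d-1}$ are the entries of the $j$-th column of $A$. Then for all but finitely many primes $p$, $a_{K_j,p}$ is $p$-integral and $$a_{K_j,p}\equiv\begin{cases}1\pmod p&\text{if }\mathrm{Frob}_p\in K_j,\\ 0\pmod p&\text{otherwise.}\end{cases}$$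
   Context: All matrices indexed by $G$ use one fixed total order on $G$, the same for rows and columns. For a prime $p$ unramified in $L$, $\mathrm{Frob}_p$ denotes the conjugacy class in $G$ of the Frobenius automorphisms of the primes of $L$ above $p$; "$\mathrm{Frob}_p\in K_j$" means this class equals $K_j$. *)

theory Defs
  imports "Jordan_Normal_Form.Gauss_Jordan_Elimination" "HOL-Computational_Algebra.Polynomial"
begin

definition QQ_adj :: "complex \<Rightarrow> complex set" where
  "QQ_adj \<xi> = {poly (map_poly of_rat q) \<xi> | q :: rat poly. True}"

text \<open>Field automorphisms of L (automatically fixing Q), extended by the identity outside L.\<close>
definition field_auts :: "complex set \<Rightarrow> (complex \<Rightarrow> complex) set" where
  "field_auts L = {\<sigma>. bij_betw \<sigma> L L \<and> (\<forall>x\<in>L. \<forall>y\<in>L. \<sigma> (x + y) = \<sigma> x + \<sigma> y \<and> \<sigma> (x * y) = \<sigma> x * \<sigma> y)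
                      \<and> \<sigma> 1 = 1 \<and> (\<forall>x. x \<notin> L \<longrightarrow> \<sigma> x = x)}"

definition grp_inv :: "(complex \<Rightarrow> complex) set \<Rightarrow> (complex \<Rightarrow> complex) \<Rightarrow> (complex \<Rightarrow> complex)" where
  "grp_inv G \<sigma> = (THE \<tau>. \<tau> \<in> G \<and> \<tau> \<circ> \<sigma> = id)"

definition conj_classes :: "(complex \<Rightarrow> complex) set \<Rightarrow> (complex \<Rightarrow> complex) set set" where
  "conj_classes G = {{\<tau> \<circ> \<sigma> \<circ> grp_inv G \<tau> | \<tau>. \<tau> \<in> G} | \<sigma>. \<sigma> \<in> G}"

definition alg_int :: "complex \<Rightarrow> bool" where
  "alg_int x \<longleftrightarrow> (\<exists>f :: int poly. lead_coeff f = 1 \<and> poly (map_poly of_int f) x = 0)"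

definition ring_of_ints :: "complex set \<Rightarrow> complex set" where
  "ring_of_ints L = {x \<in> L. alg_int x}"

definition prime_ideal_of :: "complex set \<Rightarrow> complex set \<Rightarrow> bool" where
  "prime_ideal_of R P \<longleftrightarrow> P \<subseteq> R \<and> 0 \<in> P \<and> (\<forall>x\<in>P. \<forall>y\<in>P. x + y \<in> P)
     \<and> (\<forall>x\<in>P. \<forall>y\<in>R. y * x \<in> P) \<and> 1 \<notin> P
     \<and> (\<forall>x\<in>R. \<forall>y\<in>R. x * y \<in> P \<longrightarrow> x \<in> P \<or> y \<in> P)"

text \<open>The Frobenius elements at p: those sigma in G with sigma(x) = x^p mod P on O_L for some
  prime P of O_L above p.  For p unramified this set is exactly the conjugacy class Frob_p.\<close>
definition frob_set :: "complex set \<Rightarrow> (complex \<Rightarrow> complex) set \<Rightarrow> nat \<Rightarrow> (complex \<Rightarrow> complex) set" where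
  "frob_set L G p = {\<sigma> \<in> G. \<exists>P. prime_ideal_of (ring_of_ints L) P \<and> of_nat p \<in> P \<and>
                        (\<forall>x\<in>ring_of_ints L. \<sigma> x - x ^ p \<in> P)}"

definition p_integral :: "nat \<Rightarrow> rat \<Rightarrow> bool" where
  "p_integral p q \<longleftrightarrow> \<not> (int p dvd snd (quotient_of q))"

definition rat_cong_p :: "nat \<Rightarrow> rat \<Rightarrow> rat \<Rightarrow> bool" where
  "rat_cong_p p a b \<longleftrightarrow> (\<exists>r. p_integral p r \<and> a - b = of_nat p * r)"

end

theory Submission imports Defs "HOL-Computational_Algebra.Primes" "Jordan_Normal_Form.Determinant" "Jordan_Normal_Form.Char_Poly"
begin

text \<open>
  Let \<open>b\<^sub>j : G \<rightarrow> L\<close> be column \<open>j\<close> of \<open>\<Gamma>\<^sup>-\<^sup>1 \<kappa>\<close>, so that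
  \<open>\<Sum>\<^sub>\<tau> \<sigma>\<tau>\<^sup>-\<^sup>1(\<xi>) b\<^sub>j(\<tau>) = [\<sigma> \<in> K\<^sub>j]\<close> for every \<open>\<sigma>\<close>. Then \<open>A\<^sub>i\<^sub>j = \<Sum>\<^sub>\<sigma> \<sigma>\<^sup>-\<^sup>1(\<xi>)\<^sup>i b\<^sub>j(\<sigma>)\<close>,
  and since each \<open>\<sigma>\<^sup>-\<^sup>1(\<xi>)\<close> is a root of \<open>F\<close>, the whole sequence is
  \<open>a\<^sub>n = \<Sum>\<^sub>\<sigma> \<sigma>\<^sup>-\<^sup>1(\<xi>)\<^sup>n b\<^sub>j(\<sigma>)\<close>. Uniqueness of the solution of the system and
  conjugation invariance of \<open>K\<^sub>j\<close> give \<open>\<rho>(b\<^sub>j(\<tau>\<rho>)) = b\<^sub>j(\<tau>)\<close>, so every \<open>a\<^sub>n\<close> is fixed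
  by \<open>G\<close>, hence rational (the normal basis identifies the fixed field with \<open>\<rat>\<close>).

  If \<open>P\<close> is a prime of \<open>O\<^sub>L\<close> above \<open>p\<close> and \<open>\<phi> \<in> G\<close> satisfies \<open>\<phi>(x) \<equiv> x\<^sup>p mod P\<close>, then
  \<open>a\<^sub>p \<equiv> \<Sum>\<^sub>\<sigma> \<phi>\<sigma>\<^sup>-\<^sup>1(\<xi>) b\<^sub>j(\<sigma>) = [\<phi> \<in> K\<^sub>j] mod P\<close>; after multiplying by an integer \<open>M\<close>
  that makes all \<open>M b\<^sub>j(\<sigma>)\<close> integral this is a congruence of rational integers, i.e. modulo \<open>p\<close>.
  Such a \<open>\<phi>\<close> exists whenever \<open>p\<close> does not divide an integer \<open>D\<close> with \<open>D O\<^sub>L \<subseteq> \<int>[\<xi>]\<close>: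
  a prime above \<open>p\<close> comes from Zorn's lemma, and \<open>F = \<Prod>\<^sub>\<sigma> (X - \<sigma> \<xi>)\<close> forces
  \<open>\<xi>\<^sup>p \<equiv> \<phi>(\<xi>)\<close> for some \<open>\<phi>\<close>. So the congruences hold for all \<open>p \<nmid> D M\<close>.
  Algebraic integers are treated as eigenvalues of integer matrices, which makes their
  closure under sums and products a Kronecker product computation.
\<close>

section \<open>Algebraic integers\<close>

definition int_mat_eigenvalue :: "complex \<Rightarrow> bool" where
  "int_mat_eigenvalue x \<longleftrightarrow> (\<exists>n (M :: nat \<Rightarrow> nat \<Rightarrow> int) (v :: nat \<Rightarrow> complex).
      (\<exists>i<n. v i \<noteq> 0) \<and> (\<forall>i<n. (\<Sum>j<n. of_int (M i j) * v j) = x * v i))"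

lemma alg_int_iff_algebraic_int: "alg_int x \<longleftrightarrow> algebraic_int x"
  unfolding alg_int_def algebraic_int_altdef_ipoly by auto

lemma int_mat_eigenvalue_imp_alg_int:
  assumes "int_mat_eigenvalue x" shows "alg_int x"
proof -
  from assms obtain n and M :: "nat \<Rightarrow> nat \<Rightarrow> int" and v where nz: "\<exists>i<n. v i \<noteq> 0"
    and ev: "\<forall>i<n. (\<Sum>j<n. of_int (M i j) * v j) = x * v i" unfolding int_mat_eigenvalue_def by blast
  define A :: "int mat" where "A = mat n n (\<lambda>(i,j). M i j)"
  define w where "w = vec n v"
  have A: "A \<in> carrier_mat n n" by (simp add: A_def)
  have mA: "(map_mat of_int A :: complex mat) \<in> carrier_mat n n" using A by simp
  have "eigenvector (map_mat of_int A) w x"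
    unfolding eigenvector_def
  proof (intro conjI)
    show "w \<in> carrier_vec (dim_row (map_mat of_int A))" using A by (simp add: w_def)
    show "w \<noteq> 0\<^sub>v (dim_row (map_mat of_int A))"
    proof
      assume "w = 0\<^sub>v (dim_row (map_mat of_int A))"
      then have "\<forall>i<n. v i = 0" using A unfolding w_def
        by (metis carrier_matD(1) index_map_mat(2) index_vec index_zero_vec(1))
      with nz show False by auto
    qed
    show "map_mat of_int A *\<^sub>v w = x \<cdot>\<^sub>v w"
    proof (rule eq_vecI)
      fix i assume "i < dim_vec (x \<cdot>\<^sub>v w)"
      then have i: "i < n" by (simp add: w_def)
      have "(map_mat of_int A *\<^sub>v w) $ i = (\<Sum>j<n. of_int (M i j) * v j)"
        using i unfolding A_def w_def by (simp add: mult_mat_vec_def scalar_prod_def lessThan_atLeast0)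
      also have "\<dots> = x * v i" using ev i by auto
      finally show "(map_mat of_int A *\<^sub>v w) $ i = (x \<cdot>\<^sub>v w) $ i" using i by (simp add: w_def)
    qed (simp add: w_def A_def)
  qed
  then have "eigenvalue (map_mat of_int A) x" unfolding eigenvalue_def by blast
  then have "poly (char_poly (map_mat (of_int :: int \<Rightarrow> complex) A)) x = 0"
    using eigenvalue_root_char_poly[OF mA] by blast
  moreover have "char_poly (map_mat (of_int :: int \<Rightarrow> complex) A) = map_poly of_int (char_poly A)"
    by (rule of_int_hom.char_poly_hom[OF A])
  ultimately have "poly (map_poly of_int (char_poly A)) x = 0" by simp
  moreover have "lead_coeff (char_poly A) = 1" using degree_monic_char_poly[OF A] by simp
  ultimately show ?thesis unfolding alg_int_def by blast
qed

lemma alg_int_imp_int_mat_eigenvalue: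
  assumes "alg_int x" shows "int_mat_eigenvalue x"
proof -
  from assms obtain f :: "int poly" where lc: "lead_coeff f = 1" and r: "poly (map_poly of_int f) x = 0"
    unfolding alg_int_def by blast
  define n where "n = degree f"
  have n0: "n > 0"
  proof (rule ccontr)
    assume "\<not> n > 0"
    then have "degree f = 0" by (simp add: n_def)
    then obtain c where "f = [:c:]" by (elim degree_eq_zeroE)
    with lc r show False by (simp add: one_pCons)
  qed
  \<comment> \<open>the companion matrix of f, with eigenvector \<open>(1, x, \<dots>, x\<^sup>n\<^sup>-\<^sup>1)\<close>\<close>
  define M :: "nat \<Rightarrow> nat \<Rightarrow> int" where
    "M = (\<lambda>i j. if i + 1 < n then (if j = i + 1 then 1 else 0) else - coeff f j)"
  have "(\<Sum>j<n. of_int (M i j) * x ^ j) = x * x ^ i" if i: "i < n" for i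
  proof (cases "i + 1 < n")
    case True
    then have "(\<Sum>j<n. of_int (M i j) * x ^ j) = (\<Sum>j<n. if j = i + 1 then x ^ j else 0)"
      unfolding M_def by (intro sum.cong) auto
    then show ?thesis using True by (simp add: sum.delta)
  next
    case False
    have "0 = (\<Sum>j\<le>n. of_int (coeff f j) * x ^ j)"
      using r by (simp add: poly_altdef n_def degree_map_poly coeff_map_poly)
    also have "\<dots> = (\<Sum>j<n. of_int (coeff f j) * x ^ j) + x ^ n"
      using lc by (simp add: n_def lessThan_Suc_atMost[symmetric])
    finally have "(\<Sum>j<n. of_int (coeff f j) * x ^ j) = - (x ^ n)"
      by (simp add: add_eq_0_iff)
    then have "(\<Sum>j<n. of_int (M i j) * x ^ j) = x ^ n"
      using False unfolding M_def by (simp add: sum_negf)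
    moreover have "Suc i = n" using False i by simp
    then have "x * x ^ i = x ^ n" by (simp flip: power_Suc)
    ultimately show ?thesis by simp
  qed
  moreover have "\<exists>i<n. x ^ i \<noteq> 0" using n0 by (intro exI[of _ 0]) auto
  ultimately show ?thesis unfolding int_mat_eigenvalue_def by blast
qed

lemma mult_add_less_mult:
  assumes "(a::nat) < n" "b < m" shows "a * m + b < n * m"
proof -
  have "a * m + b < Suc a * m" using assms(2) by simp
  also have "\<dots> \<le> n * m" using assms(1) by (intro mult_le_mono1) simp
  finally show ?thesis .
qed

lemma sum_div_mod_eq_sum_sum:
  fixes f :: "nat \<Rightarrow> nat \<Rightarrow> 'a :: comm_monoid_add"
  assumes "m > 0"
  shows "(\<Sum>l<n*m. f (l div m) (l mod m)) = (\<Sum>i<n. \<Sum>j<m. f i j)"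
proof -
  have "(\<Sum>l<n*m. f (l div m) (l mod m)) = (\<Sum>(i,j)\<in>{..<n}\<times>{..<m}. f i j)"
  proof (rule sum.reindex_bij_witness[where j = "\<lambda>l. (l div m, l mod m)" and i = "\<lambda>(i,j). i*m+j"])
    fix a assume "a \<in> {..<n}\<times>{..<m}"
    then show "(case a of (i, j) \<Rightarrow> i * m + j) \<in> {..<n*m}"
      by (auto intro: mult_add_less_mult)
  qed (use assms in \<open>auto simp: less_mult_imp_div_less\<close>)
  then show ?thesis by (simp add: sum.cartesian_product)
qed

lemma tensor_vector_nonzero:
  fixes v w :: "nat \<Rightarrow> complex" and n m :: nat
  assumes "\<exists>i<n. v i \<noteq> (0::complex)" "\<exists>i<m. w i \<noteq> 0"
  shows "\<exists>k<n*m. v (k div m) * w (k mod m) \<noteq> 0"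
proof -
  from assms obtain a b where "a < n" "v a \<noteq> 0" "b < m" "w b \<noteq> 0" by auto
  then show ?thesis by (intro exI[of _ "a*m+b"]) (auto intro: mult_add_less_mult)
qed

text \<open>Sums and products of eigenvalues are eigenvalues of Kronecker sums and products.\<close>

lemma int_mat_eigenvalue_mult:
  assumes "int_mat_eigenvalue x" "int_mat_eigenvalue y" shows "int_mat_eigenvalue (x * y)"
proof -
  from assms(1) obtain n and M :: "nat \<Rightarrow> nat \<Rightarrow> int" and v where nz1: "\<exists>i<n. v i \<noteq> 0"
    and e1: "\<forall>i<n. (\<Sum>j<n. of_int (M i j) * v j) = x * v i" unfolding int_mat_eigenvalue_def by blast
  from assms(2) obtain m and N :: "nat \<Rightarrow> nat \<Rightarrow> int" and w where nz2: "\<exists>i<m. w i \<noteq> 0"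
    and e2: "\<forall>i<m. (\<Sum>j<m. of_int (N i j) * w j) = y * w i" unfolding int_mat_eigenvalue_def by blast
  from nz2 have m0: "m > 0" by auto
  define u where "u = (\<lambda>k. v (k div m) * w (k mod m))"
  define T where "T = (\<lambda>k l. M (k div m) (l div m) * N (k mod m) (l mod m))"
  have "(\<Sum>l<n*m. of_int (T k l) * u l) = x * y * u k" if k: "k < n*m" for k
  proof -
    have a: "k div m < n" using k m0 by (simp add: less_mult_imp_div_less)
    have "(\<Sum>l<n*m. of_int (T k l) * u l) =
          (\<Sum>i<n. \<Sum>j<m. (of_int (M (k div m) i) * v i) * (of_int (N (k mod m) j) * w j))"
      unfolding T_def u_def
      using sum_div_mod_eq_sum_sum[OF m0, of "\<lambda>i j. (of_int (M (k div m) i) * v i) * (of_int (N (k mod m) j) * w j)" n]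
      by (simp add: algebra_simps)
    also have "\<dots> = (\<Sum>i<n. of_int (M (k div m) i) * v i) * (\<Sum>j<m. of_int (N (k mod m) j) * w j)"
      by (simp add: sum_product)
    also have "\<dots> = x * y * u k"
      using e1[rule_format, OF a] e2[rule_format, of "k mod m"] m0 by (simp add: u_def)
    finally show ?thesis .
  qed
  moreover have "\<exists>k<n*m. u k \<noteq> 0"
    unfolding u_def by (rule tensor_vector_nonzero[OF nz1 nz2])
  ultimately show ?thesis
    unfolding int_mat_eigenvalue_def by (intro exI[of _ "n*m"] exI[of _ T] exI[of _ u]) auto
qed

lemma int_mat_eigenvalue_add:
  assumes "int_mat_eigenvalue x" "int_mat_eigenvalue y" shows "int_mat_eigenvalue (x + y)"
proof -
  from assms(1) obtain n and M :: "nat \<Rightarrow> nat \<Rightarrow> int" and v where nz1: "\<exists>i<n. v i \<noteq> 0"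
    and e1: "\<forall>i<n. (\<Sum>j<n. of_int (M i j) * v j) = x * v i" unfolding int_mat_eigenvalue_def by blast
  from assms(2) obtain m and N :: "nat \<Rightarrow> nat \<Rightarrow> int" and w where nz2: "\<exists>i<m. w i \<noteq> 0"
    and e2: "\<forall>i<m. (\<Sum>j<m. of_int (N i j) * w j) = y * w i" unfolding int_mat_eigenvalue_def by blast
  from nz2 have m0: "m > 0" by auto
  define u where "u = (\<lambda>k. v (k div m) * w (k mod m))"
  define T where "T = (\<lambda>k l. M (k div m) (l div m) * (if k mod m = l mod m then 1 else 0)
     + (if k div m = l div m then 1 else 0) * N (k mod m) (l mod m))"
  have "\<forall>k<n*m. (\<Sum>l<n*m. of_int (T k l) * u l) = (x + y) * u k"
  proof (intro allI impI)
    fix k assume k: "k < n*m"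
    have a: "k div m < n" using k m0 by (simp add: less_mult_imp_div_less)
    have b: "k mod m < m" using m0 by simp
    define g where "g = (\<lambda>i j. (of_int (M (k div m) i) * v i) * (if k mod m = j then w j else 0)
              + (if k div m = i then v i else 0) * (of_int (N (k mod m) j) * w j))"
    have pt: "of_int (T k l) * u l = g (l div m) (l mod m)" for l
      unfolding T_def u_def g_def by (auto simp: algebra_simps)
    have h1: "(\<Sum>i<n. \<Sum>j<m. (of_int (M (k div m) i) * v i) * (if k mod m = j then w j else 0))
        = (\<Sum>i<n. of_int (M (k div m) i) * v i) * w (k mod m)"
      using b by (simp add: if_distrib sum.delta sum_distrib_right cong: if_cong)
    have h2: "(\<Sum>i<n. \<Sum>j<m. (if k div m = i then v i else 0) * (of_int (N (k mod m) j) * w j))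
        = v (k div m) * (\<Sum>j<m. of_int (N (k mod m) j) * w j)"
    proof -
      have "(\<Sum>i<n. \<Sum>j<m. (if k div m = i then v i else 0) * (of_int (N (k mod m) j) * w j))
        = (\<Sum>i<n. if k div m = i then v i * (\<Sum>j<m. of_int (N (k mod m) j) * w j) else 0)"
        by (intro sum.cong refl) (simp add: sum_distrib_left)
      also have "\<dots> = v (k div m) * (\<Sum>j<m. of_int (N (k mod m) j) * w j)"
        using a by (simp add: sum.delta)
      finally show ?thesis .
    qed
    have "(\<Sum>l<n*m. of_int (T k l) * u l) = (\<Sum>i<n. \<Sum>j<m. g i j)"
      unfolding pt using sum_div_mod_eq_sum_sum[OF m0, of g n] by simp
    also have "\<dots> = (\<Sum>i<n. \<Sum>j<m. (of_int (M (k div m) i) * v i) * (if k mod m = j then w j else 0))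
       + (\<Sum>i<n. \<Sum>j<m. (if k div m = i then v i else 0) * (of_int (N (k mod m) j) * w j))"
      unfolding g_def by (simp add: sum.distrib)
    also have "\<dots> = (\<Sum>i<n. of_int (M (k div m) i) * v i) * w (k mod m) + v (k div m) * (\<Sum>j<m. of_int (N (k mod m) j) * w j)"
      using h1 h2 by simp
    also have "\<dots> = (x + y) * u k" using e1 e2 a b by (simp add: u_def algebra_simps)
    finally show "(\<Sum>l<n*m. of_int (T k l) * u l) = (x + y) * u k" .
  qed
  moreover have "\<exists>k<n*m. u k \<noteq> 0"
    unfolding u_def by (rule tensor_vector_nonzero[OF nz1 nz2])
  ultimately show ?thesis unfolding int_mat_eigenvalue_def by blast
qed

lemma alg_int_mult:
  assumes "alg_int x" "alg_int y" shows "alg_int (x * y)"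
  using int_mat_eigenvalue_mult[OF assms[THEN alg_int_imp_int_mat_eigenvalue]]
  by (rule int_mat_eigenvalue_imp_alg_int)

lemma alg_int_add:
  assumes "alg_int x" "alg_int y" shows "alg_int (x + y)"
  using int_mat_eigenvalue_add[OF assms[THEN alg_int_imp_int_mat_eigenvalue]]
  by (rule int_mat_eigenvalue_imp_alg_int)

lemma alg_int_of_int [simp]: "alg_int (of_int k)"
  by (simp add: alg_int_iff_algebraic_int)

lemma alg_int_of_nat [simp]: "alg_int (of_nat k)"
  by (simp add: alg_int_iff_algebraic_int)

lemma alg_int_0 [simp]: "alg_int 0" and alg_int_1 [simp]: "alg_int 1"
  by (simp_all add: alg_int_iff_algebraic_int)

lemma alg_int_uminus: "alg_int x \<Longrightarrow> alg_int (- x)"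
  by (simp add: alg_int_iff_algebraic_int)

lemma alg_int_diff: "alg_int x \<Longrightarrow> alg_int y \<Longrightarrow> alg_int (x - y)"
  using alg_int_add[of x "- y"] alg_int_uminus[of y] by simp

lemma alg_int_power: "alg_int x \<Longrightarrow> alg_int (x ^ n)"
  by (induction n) (auto intro: alg_int_mult)

lemma alg_int_prod: "(\<And>i. i \<in> I \<Longrightarrow> alg_int (f i)) \<Longrightarrow> alg_int (prod f I)"
  by (induction I rule: infinite_finite_induct) (auto intro: alg_int_mult)

lemma alg_int_Rats_imp_Ints: "alg_int x \<Longrightarrow> x \<in> \<rat> \<Longrightarrow> x \<in> \<int>"
  by (simp add: alg_int_iff_algebraic_int rational_algebraic_int_is_int)

interpretation of_rat_poly_hom: map_poly_comm_ring_hom "of_rat :: rat \<Rightarrow> complex" ..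

lemma QQ_adj_iff: "x \<in> QQ_adj z \<longleftrightarrow> (\<exists>q. x = poly (map_poly of_rat q) z)"
  unfolding QQ_adj_def by auto

lemma QQ_adj_of_rat[simp,intro]: "of_rat r \<in> QQ_adj z"
  unfolding QQ_adj_iff by (rule exI[of _ "[:r:]"]) (simp add: poly_altdef)

lemma QQ_adj_0[simp,intro]: "0 \<in> QQ_adj z" using QQ_adj_of_rat[of 0 z] by simp
lemma QQ_adj_1[simp,intro]: "1 \<in> QQ_adj z" using QQ_adj_of_rat[of 1 z] by simp
lemma QQ_adj_of_int[simp,intro]: "of_int k \<in> QQ_adj z" using QQ_adj_of_rat[of "of_int k" z] by simp
lemma QQ_adj_of_nat[simp,intro]: "of_nat k \<in> QQ_adj z" using QQ_adj_of_rat[of "of_nat k" z] by simp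
lemma QQ_adj_gen[simp,intro]: "z \<in> QQ_adj z"
  unfolding QQ_adj_iff by (rule exI[of _ "[:0,1:]"]) simp

lemma QQ_adj_add[intro]: "x \<in> QQ_adj z \<Longrightarrow> y \<in> QQ_adj z \<Longrightarrow> x + y \<in> QQ_adj z"
proof -
  assume "x \<in> QQ_adj z" "y \<in> QQ_adj z"
  then obtain q1 q2 where "x = poly (map_poly of_rat q1) z" "y = poly (map_poly of_rat q2) z"
    unfolding QQ_adj_iff by blast
  then show ?thesis unfolding QQ_adj_iff by (intro exI[of _ "q1 + q2"]) (simp add: hom_distribs)
qed
lemma QQ_adj_mult[intro]: "x \<in> QQ_adj z \<Longrightarrow> y \<in> QQ_adj z \<Longrightarrow> x * y \<in> QQ_adj z"
proof -
  assume "x \<in> QQ_adj z" "y \<in> QQ_adj z"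
  then obtain q1 q2 where "x = poly (map_poly of_rat q1) z" "y = poly (map_poly of_rat q2) z"
    unfolding QQ_adj_iff by blast
  moreover have "map_poly (of_rat::rat\<Rightarrow>complex) (q1*q2) = map_poly of_rat q1 * map_poly of_rat q2"
    by (rule of_rat_poly_hom.hom_mult)
  ultimately show ?thesis unfolding QQ_adj_iff by (intro exI[of _ "q1 * q2"]) simp
qed
lemma QQ_adj_uminus[intro]: "x \<in> QQ_adj z \<Longrightarrow> - x \<in> QQ_adj z"
proof -
  assume "x \<in> QQ_adj z"
  then have "of_rat (-1) * x \<in> QQ_adj z" by (intro QQ_adj_mult QQ_adj_of_rat)
  then show ?thesis by simp
qed
lemma QQ_adj_diff[intro]: "x \<in> QQ_adj z \<Longrightarrow> y \<in> QQ_adj z \<Longrightarrow> x - y \<in> QQ_adj z"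
  using QQ_adj_add[of x z "-y"] QQ_adj_uminus[of y z] by simp
lemma QQ_adj_power[intro]: "x \<in> QQ_adj z \<Longrightarrow> x ^ n \<in> QQ_adj z"
  by (induction n) auto
lemma QQ_adj_sum[intro]: "(\<And>i. i \<in> I \<Longrightarrow> f i \<in> QQ_adj z) \<Longrightarrow> sum f I \<in> QQ_adj z"
  by (induction I rule: infinite_finite_induct) auto
lemma QQ_adj_prod[intro]: "(\<And>i. i \<in> I \<Longrightarrow> f i \<in> QQ_adj z) \<Longrightarrow> prod f I \<in> QQ_adj z"
  by (induction I rule: infinite_finite_induct) auto

lemma poly_of_rat_sum: "poly (map_poly of_rat q) (x::complex) = (\<Sum>i\<le>degree q. of_rat (coeff q i) * x ^ i)"
  by (simp add: poly_altdef)

section \<open>Automorphisms\<close>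

context
  fixes L :: "complex set" and \<sigma> :: "complex \<Rightarrow> complex"
  assumes s: "\<sigma> \<in> field_auts L"
begin

lemma aut_bij: "bij_betw \<sigma> L L" using s unfolding field_auts_def by auto
lemma aut_add: "x \<in> L \<Longrightarrow> y \<in> L \<Longrightarrow> \<sigma> (x + y) = \<sigma> x + \<sigma> y" using s unfolding field_auts_def by auto
lemma aut_mult: "x \<in> L \<Longrightarrow> y \<in> L \<Longrightarrow> \<sigma> (x * y) = \<sigma> x * \<sigma> y" using s unfolding field_auts_def by auto
lemma aut_1: "\<sigma> 1 = 1" using s unfolding field_auts_def by auto
lemma aut_out: "x \<notin> L \<Longrightarrow> \<sigma> x = x" using s unfolding field_auts_def by auto
lemma aut_in: "x \<in> L \<Longrightarrow> \<sigma> x \<in> L" using aut_bij bij_betwE by blast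
lemma aut_inj: "x \<in> L \<Longrightarrow> y \<in> L \<Longrightarrow> \<sigma> x = \<sigma> y \<Longrightarrow> x = y"
  using aut_bij by (metis bij_betw_iff_bijections)
end

context
  fixes z :: complex and \<sigma> :: "complex \<Rightarrow> complex"
  assumes s: "\<sigma> \<in> field_auts (QQ_adj z)"
begin

lemma aut_0: "\<sigma> 0 = 0"
proof -
  have "\<sigma> (0 + 0) = \<sigma> 0 + \<sigma> 0" by (rule aut_add[OF s]) auto
  then show ?thesis by simp
qed

lemma aut_uminus: "x \<in> QQ_adj z \<Longrightarrow> \<sigma> (- x) = - \<sigma> x"
proof -
  assume x: "x \<in> QQ_adj z"
  have "\<sigma> (x + - x) = \<sigma> x + \<sigma> (- x)" by (rule aut_add[OF s]) (use x in auto)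
  then show ?thesis by (simp add: aut_0 eq_neg_iff_add_eq_0 add.commute)
qed

lemma aut_diff: "x \<in> QQ_adj z \<Longrightarrow> y \<in> QQ_adj z \<Longrightarrow> \<sigma> (x - y) = \<sigma> x - \<sigma> y"
  using aut_add[OF s, of x "-y"] aut_uminus[of y] by auto

lemma aut_of_nat: "\<sigma> (of_nat n) = of_nat n"
proof (induction n)
  case 0 then show ?case by (simp add: aut_0)
next
  case (Suc n)
  have "\<sigma> (of_nat n + 1) = \<sigma> (of_nat n) + \<sigma> 1" by (rule aut_add[OF s]) auto
  moreover have "(of_nat (Suc n) :: complex) = of_nat n + 1" by simp
  ultimately show ?case using Suc aut_1[OF s] by (simp add: add.commute)
qed

lemma aut_of_int: "\<sigma> (of_int k) = of_int k"
proof (cases "k \<ge> 0")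
  case True
  then show ?thesis using aut_of_nat[of "nat k"] by simp
next
  case False
  then have e: "of_int k = - (of_nat (nat (-k)) :: complex)" by simp
  have "\<sigma> (- (of_nat (nat (-k)))) = - \<sigma> (of_nat (nat (-k)))" by (rule aut_uminus) simp
  then show ?thesis unfolding e using aut_of_nat[of "nat (-k)"] by simp
qed

lemma aut_of_rat: "\<sigma> (of_rat r) = of_rat r"
proof -
  obtain a b where r: "r = of_int a / of_int b" and b: "b \<noteq> 0"
    by (metis Fract_of_int_quotient Rat_cases less_irrefl)
  have "of_rat r * of_int b = (of_int a :: complex)" using b by (simp add: r of_rat_divide)
  then have "\<sigma> (of_rat r * of_int b) = of_int a" by (simp add: aut_of_int)
  moreover have "\<sigma> (of_rat r * of_int b) = \<sigma> (of_rat r) * of_int b"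
    using aut_mult[OF s, of "of_rat r" "of_int b"] by (simp add: aut_of_int)
  ultimately have "\<sigma> (of_rat r) * of_int b = of_int a" by simp
  then show ?thesis using b by (simp add: r of_rat_divide field_simps)
qed

lemma aut_power: "x \<in> QQ_adj z \<Longrightarrow> \<sigma> (x ^ n) = \<sigma> x ^ n"
  by (induction n) (auto simp: aut_1[OF s] aut_mult[OF s] QQ_adj_power)

lemma aut_sum: "(\<And>i. i \<in> I \<Longrightarrow> f i \<in> QQ_adj z) \<Longrightarrow> \<sigma> (sum f I) = (\<Sum>i\<in>I. \<sigma> (f i))"
proof (induction I rule: infinite_finite_induct)
  case (insert i I)
  then show ?case by (simp add: aut_add[OF s] QQ_adj_sum)
qed (auto simp: aut_0)

lemma aut_prod: "(\<And>i. i \<in> I \<Longrightarrow> f i \<in> QQ_adj z) \<Longrightarrow> \<sigma> (prod f I) = (\<Prod>i\<in>I. \<sigma> (f i))"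
proof (induction I rule: infinite_finite_induct)
  case (insert i I)
  then show ?case by (simp add: aut_mult[OF s] QQ_adj_prod)
qed (auto simp: aut_1[OF s])

lemma aut_poly: "\<sigma> (poly (map_poly of_rat q) z) = poly (map_poly of_rat q) (\<sigma> z)"
proof -
  have "\<sigma> (poly (map_poly of_rat q) z) = (\<Sum>i\<le>degree q. \<sigma> (of_rat (coeff q i) * z ^ i))"
    unfolding poly_of_rat_sum by (rule aut_sum) auto
  also have "\<dots> = (\<Sum>i\<le>degree q. of_rat (coeff q i) * \<sigma> z ^ i)"
    by (intro sum.cong refl) (simp add: aut_mult[OF s] aut_of_rat aut_power QQ_adj_power)
  finally show ?thesis unfolding poly_of_rat_sum .
qed

lemma aut_poly_int: "\<sigma> (poly (map_poly of_int f) z) = poly (map_poly of_int f) (\<sigma> z)"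
proof -
  have "map_poly (of_rat :: rat \<Rightarrow> complex) (map_poly of_int f) = map_poly of_int f"
    by (simp add: map_poly_map_poly o_def)
  then show ?thesis using aut_poly[of "map_poly of_int f"] by simp
qed

lemma aut_alg_int: "x \<in> QQ_adj z \<Longrightarrow> alg_int x \<Longrightarrow> alg_int (\<sigma> x)"
proof -
  assume x: "x \<in> QQ_adj z" and a: "alg_int x"
  then obtain f :: "int poly" where f: "lead_coeff f = 1" "poly (map_poly of_int f) x = 0"
    unfolding alg_int_def by blast
  obtain q where q: "x = poly (map_poly of_rat q) z" using x unfolding QQ_adj_iff by blast
  have "\<sigma> (poly (map_poly of_int f) x) = poly (map_poly of_int f) (\<sigma> x)"
  proof -
    have "poly (map_poly of_int f) x = (\<Sum>i\<le>degree f. of_int (coeff f i) * x ^ i)"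
      by (simp add: poly_altdef)
    moreover have "\<sigma> (\<Sum>i\<le>degree f. of_int (coeff f i) * x ^ i) = (\<Sum>i\<le>degree f. of_int (coeff f i) * \<sigma> x ^ i)"
      by (subst aut_sum) (use x in \<open>auto simp: aut_mult[OF s] aut_of_int aut_power QQ_adj_power\<close>)
    moreover have "poly (map_poly of_int f) (\<sigma> x) = (\<Sum>i\<le>degree f. of_int (coeff f i) * \<sigma> x ^ i)"
      by (simp add: poly_altdef)
    ultimately show ?thesis by simp
  qed
  then have "poly (map_poly of_int f) (\<sigma> x) = 0" using f(2) aut_0 by simp
  with f(1) show ?thesis unfolding alg_int_def by blast
qed

end

lemma aut_id: "id \<in> field_auts L" unfolding field_auts_def by auto

lemma aut_comp: "\<sigma> \<in> field_auts L \<Longrightarrow> \<tau> \<in> field_auts L \<Longrightarrow> \<sigma> \<circ> \<tau> \<in> field_auts L"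
  unfolding field_auts_def by (auto simp: bij_betw_trans bij_betw_apply)

definition inv_aut :: "complex set \<Rightarrow> (complex \<Rightarrow> complex) \<Rightarrow> complex \<Rightarrow> complex" where
  "inv_aut L \<sigma> = (\<lambda>x. if x \<in> L then inv_into L \<sigma> x else x)"

context
  fixes L :: "complex set" and \<sigma> :: "complex \<Rightarrow> complex"
  assumes s: "\<sigma> \<in> field_auts L"
begin

lemma inv_aut_left: "inv_aut L \<sigma> \<circ> \<sigma> = id"
proof
  fix x show "(inv_aut L \<sigma> \<circ> \<sigma>) x = id x"
  proof (cases "x \<in> L")
    case True
    then show ?thesis using aut_bij[OF s] aut_in[OF s True]
      by (simp add: inv_aut_def bij_betw_inv_into_left)
  next
    case False
    then show ?thesis using aut_out[OF s False] by (simp add: inv_aut_def)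
  qed
qed

lemma inv_aut_right: "\<sigma> \<circ> inv_aut L \<sigma> = id"
proof
  fix x show "(\<sigma> \<circ> inv_aut L \<sigma>) x = id x"
  proof (cases "x \<in> L")
    case True
    then show ?thesis using aut_bij[OF s]
      by (simp add: inv_aut_def bij_betw_inv_into_right)
  next
    case False
    then show ?thesis using aut_out[OF s False] by (simp add: inv_aut_def)
  qed
qed

lemma inv_aut_in: "inv_aut L \<sigma> \<in> field_auts L"
proof -
  let ?t = "inv_aut L \<sigma>"
  have b: "bij_betw ?t L L"
  proof -
    have "bij_betw (inv_into L \<sigma>) L L" using aut_bij[OF s] by (rule bij_betw_inv_into)
    then show ?thesis by (rule bij_betw_cong[THEN iffD1, rotated]) (simp add: inv_aut_def)
  qed
  have tin: "x \<in> L \<Longrightarrow> ?t x \<in> L" for x using b bij_betwE by blast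
  have st: "\<sigma> (?t x) = x" for x using inv_aut_right by (metis comp_apply id_apply)
  have ts: "?t (\<sigma> x) = x" for x using inv_aut_left by (metis comp_apply id_apply)
  have add: "?t (x + y) = ?t x + ?t y" if "x \<in> L" "y \<in> L" for x y
  proof -
    have "\<sigma> (?t x + ?t y) = x + y" using aut_add[OF s, of "?t x" "?t y"] tin that st by simp
    then show ?thesis using ts by metis
  qed
  have mul: "?t (x * y) = ?t x * ?t y" if "x \<in> L" "y \<in> L" for x y
  proof -
    have "\<sigma> (?t x * ?t y) = x * y" using aut_mult[OF s, of "?t x" "?t y"] tin that st by simp
    then show ?thesis using ts by metis
  qed
  have one: "?t 1 = 1" using ts[of 1] aut_1[OF s] by simp
  show ?thesis unfolding field_auts_def using b add mul one by (auto simp: inv_aut_def)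
qed

lemma grp_inv_eq: "grp_inv (field_auts L) \<sigma> = inv_aut L \<sigma>"
  unfolding grp_inv_def
proof (rule the_equality)
  show "inv_aut L \<sigma> \<in> field_auts L \<and> inv_aut L \<sigma> \<circ> \<sigma> = id"
    using inv_aut_in inv_aut_left by blast
next
  fix \<tau> assume t: "\<tau> \<in> field_auts L \<and> \<tau> \<circ> \<sigma> = id"
  have "\<tau> = \<tau> \<circ> (\<sigma> \<circ> inv_aut L \<sigma>)" using inv_aut_right by simp
  also have "\<dots> = inv_aut L \<sigma>" using t by (simp add: o_assoc)
  finally show "\<tau> = inv_aut L \<sigma>" .
qed

lemma grp_inv_in: "grp_inv (field_auts L) \<sigma> \<in> field_auts L"
  using grp_inv_eq inv_aut_in by simp
lemma grp_inv_left: "grp_inv (field_auts L) \<sigma> \<circ> \<sigma> = id"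
  using grp_inv_eq inv_aut_left by simp
lemma grp_inv_right: "\<sigma> \<circ> grp_inv (field_auts L) \<sigma> = id"
  using grp_inv_eq inv_aut_right by simp
lemma grp_inv_left_app: "grp_inv (field_auts L) \<sigma> (\<sigma> x) = x"
  using grp_inv_left by (metis comp_apply id_apply)
lemma grp_inv_right_app: "\<sigma> (grp_inv (field_auts L) \<sigma> x) = x"
  using grp_inv_right by (metis comp_apply id_apply)

end

lemma grp_inv_unique:
  assumes "\<sigma> \<in> field_auts L" "\<tau> \<in> field_auts L" "\<tau> \<circ> \<sigma> = id"
  shows "grp_inv (field_auts L) \<sigma> = \<tau>"
proof -
  have "\<tau> = \<tau> \<circ> (\<sigma> \<circ> grp_inv (field_auts L) \<sigma>)" using grp_inv_right[OF assms(1)] by simp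
  also have "\<dots> = grp_inv (field_auts L) \<sigma>" using assms(3) by (simp add: o_assoc)
  finally show ?thesis by simp
qed

lemma grp_inv_comp:
  assumes "\<sigma> \<in> field_auts L" "\<tau> \<in> field_auts L"
  shows "grp_inv (field_auts L) (\<sigma> \<circ> \<tau>) =
     grp_inv (field_auts L) \<tau> \<circ> grp_inv (field_auts L) \<sigma>"
proof (rule grp_inv_unique)
  show "\<sigma> \<circ> \<tau> \<in> field_auts L" using assms aut_comp by blast
  show "grp_inv (field_auts L) \<tau> \<circ> grp_inv (field_auts L) \<sigma> \<in> field_auts L"
    using assms aut_comp grp_inv_in by blast
  have "grp_inv (field_auts L) \<tau> \<circ> grp_inv (field_auts L) \<sigma> \<circ> (\<sigma> \<circ> \<tau>)
     = grp_inv (field_auts L) \<tau> \<circ> (grp_inv (field_auts L) \<sigma> \<circ> \<sigma>) \<circ> \<tau>"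
    by (simp add: o_assoc)
  also have "\<dots> = id" using assms by (simp add: grp_inv_left)
  finally show "grp_inv (field_auts L) \<tau> \<circ> grp_inv (field_auts L) \<sigma> \<circ> (\<sigma> \<circ> \<tau>) = id" .
qed

lemma grp_inv_inv:
  assumes "\<sigma> \<in> field_auts L"
  shows "grp_inv (field_auts L) (grp_inv (field_auts L) \<sigma>) = \<sigma>"
  by (rule grp_inv_unique) (use assms grp_inv_in grp_inv_right in auto)

locale normal_basis_field =
  fixes F :: "int poly" and \<xi> :: complex
  assumes monic: "lead_coeff F = 1"
    and root: "poly (map_poly of_int F) \<xi> = 0"
    and galois: "card (field_auts (QQ_adj \<xi>)) = degree F"
    and normal_indep: "\<forall>c :: (complex \<Rightarrow> complex) \<Rightarrow> rat.
          (\<Sum>\<sigma>\<in>field_auts (QQ_adj \<xi>). of_rat (c \<sigma>) * \<sigma> \<xi>) = 0 \<longrightarrow> (\<forall>\<sigma>\<in>field_auts (QQ_adj \<xi>). c \<sigma> = 0)"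
    and normal_span: "\<forall>x\<in>QQ_adj \<xi>. \<exists>c :: (complex \<Rightarrow> complex) \<Rightarrow> rat.
          x = (\<Sum>\<sigma>\<in>field_auts (QQ_adj \<xi>). of_rat (c \<sigma>) * \<sigma> \<xi>)"
begin

abbreviation L :: "complex set" where "L \<equiv> QQ_adj \<xi>"
abbreviation G :: "(complex \<Rightarrow> complex) set" where "G \<equiv> field_auts L"
abbreviation d :: nat where "d \<equiv> degree F"
abbreviation ginv :: "(complex \<Rightarrow> complex) \<Rightarrow> complex \<Rightarrow> complex" where "ginv \<equiv> grp_inv G"

lemma degree_pos: "d > 0"
proof (rule ccontr)
  assume "\<not> d > 0"
  then obtain c where "F = [:c:]" by (auto elim: degree_eq_zeroE)
  with monic have "F = 1" by (simp add: one_pCons)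
  with root show False by simp
qed

lemma finite_G: "finite G" using degree_pos galois card_gt_0_iff by metis

lemma id_G: "id \<in> G" by (rule aut_id)
lemma comp_G: "\<sigma> \<in> G \<Longrightarrow> \<tau> \<in> G \<Longrightarrow> \<sigma> \<circ> \<tau> \<in> G" by (rule aut_comp)
lemma ginv_G: "\<sigma> \<in> G \<Longrightarrow> ginv \<sigma> \<in> G" by (rule grp_inv_in)

lemma conj_in_L: "\<sigma> \<in> G \<Longrightarrow> \<sigma> \<xi> \<in> L" using aut_in[of \<sigma> L \<xi>] by simp

lemma conj_root: "\<sigma> \<in> G \<Longrightarrow> poly (map_poly of_int F) (\<sigma> \<xi>) = 0"
  using aut_poly_int[of \<sigma> \<xi> F] root aut_0[where \<sigma>=\<sigma> and z=\<xi>] by simp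

lemma alg_int_conj: "\<sigma> \<in> G \<Longrightarrow> alg_int (\<sigma> \<xi>)"
  using conj_root monic unfolding alg_int_def by blast

lemma aut_eq_if_xi_eq:
  assumes "\<sigma> \<in> G" "\<tau> \<in> G" "\<sigma> \<xi> = \<tau> \<xi>" shows "\<sigma> = \<tau>"
proof
  fix x show "\<sigma> x = \<tau> x"
  proof (cases "x \<in> L")
    case True
    then obtain q where "x = poly (map_poly of_rat q) \<xi>" unfolding QQ_adj_iff by blast
    then show ?thesis using aut_poly[OF assms(1), of q] aut_poly[OF assms(2), of q] assms(3) by simp
  next
    case False
    then show ?thesis using aut_out[OF assms(1)] aut_out[OF assms(2)] by simp
  qed
qed

lemma inj_on_conj: "inj_on (\<lambda>\<sigma>. \<sigma> \<xi>) G"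
  using aut_eq_if_xi_eq by (auto simp: inj_on_def)

lemma ginv_cancel:
  assumes "\<rho> \<in> G"
  shows "ginv \<rho> \<circ> (\<rho> \<circ> a) = a" "\<rho> \<circ> (ginv \<rho> \<circ> a) = a"
    "a \<circ> \<rho> \<circ> ginv \<rho> = a" "a \<circ> ginv \<rho> \<circ> \<rho> = a"
  using grp_inv_left[OF assms] grp_inv_right[OF assms]
  by (simp_all add: o_assoc[symmetric]) (simp_all add: o_assoc)

lemma bij_betw_comp_left: "\<rho> \<in> G \<Longrightarrow> bij_betw (\<lambda>\<sigma>. \<rho> \<circ> \<sigma>) G G"
  by (rule bij_betw_byWitness[where f' = "\<lambda>\<sigma>. ginv \<rho> \<circ> \<sigma>"])
     (auto simp: ginv_cancel comp_G ginv_G)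

lemma bij_betw_comp_right: "\<rho> \<in> G \<Longrightarrow> bij_betw (\<lambda>\<sigma>. \<sigma> \<circ> \<rho>) G G"
  by (rule bij_betw_byWitness[where f' = "\<lambda>\<sigma>. \<sigma> \<circ> ginv \<rho>"])
     (auto simp: ginv_cancel comp_G ginv_G)

lemma bij_betw_ginv: "bij_betw ginv G G"
  by (rule bij_betw_byWitness[where f' = ginv]) (auto simp: grp_inv_inv ginv_G)

lemma sum_comp_left: "\<rho> \<in> G \<Longrightarrow> (\<Sum>\<sigma>\<in>G. f (\<rho> \<circ> \<sigma>)) = (\<Sum>\<sigma>\<in>G. f \<sigma>)"
  using sum.reindex_bij_betw[OF bij_betw_comp_left] by blast
lemma sum_comp_right: "\<rho> \<in> G \<Longrightarrow> (\<Sum>\<sigma>\<in>G. f (\<sigma> \<circ> \<rho>)) = (\<Sum>\<sigma>\<in>G. f \<sigma>)"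
  using sum.reindex_bij_betw[OF bij_betw_comp_right] by blast
lemma sum_ginv: "(\<Sum>\<sigma>\<in>G. f (ginv \<sigma>)) = (\<Sum>\<sigma>\<in>G. f \<sigma>)"
  using sum.reindex_bij_betw[OF bij_betw_ginv] by blast
lemma prod_comp_left: "\<rho> \<in> G \<Longrightarrow> (\<Prod>\<sigma>\<in>G. f (\<rho> \<circ> \<sigma>)) = (\<Prod>\<sigma>\<in>G. f \<sigma>)"
  using prod.reindex_bij_betw[OF bij_betw_comp_left] by blast

section \<open>Fixed field\<close>

text \<open>A \<open>G\<close>-invariant element has constant coordinates in the normal basis.\<close>

lemma fixed_eq_rat_multiple:
  assumes y: "y \<in> L" and inv: "\<forall>\<rho>\<in>G. \<rho> y = y"
  shows "\<exists>r. y = of_rat r * (\<Sum>\<sigma>\<in>G. \<sigma> \<xi>)"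
proof -
  obtain c where c: "y = (\<Sum>\<sigma>\<in>G. of_rat (c \<sigma>) * \<sigma> \<xi>)" using normal_span y by blast
  have ceq: "c \<rho> = c id" if r: "\<rho> \<in> G" for \<rho>
  proof -
    have "\<rho> y = (\<Sum>\<sigma>\<in>G. \<rho> (of_rat (c \<sigma>) * \<sigma> \<xi>))"
      unfolding c by (rule aut_sum[OF r]) (auto simp: conj_in_L intro!: QQ_adj_mult)
    also have "\<dots> = (\<Sum>\<sigma>\<in>G. of_rat (c \<sigma>) * (\<rho> \<circ> \<sigma>) \<xi>)"
      by (intro sum.cong refl) (simp add: aut_mult[OF r] conj_in_L aut_of_rat[OF r])
    also have "\<dots> = (\<Sum>\<sigma>\<in>G. of_rat (c (ginv \<rho> \<circ> (\<rho> \<circ> \<sigma>))) * (\<rho> \<circ> \<sigma>) \<xi>)"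
      by (intro sum.cong refl) (simp add: ginv_cancel(1)[OF r])
    also have "\<dots> = (\<Sum>\<sigma>\<in>G. of_rat (c (ginv \<rho> \<circ> \<sigma>)) * \<sigma> \<xi>)"
      by (rule sum_comp_left[OF r, where f = "\<lambda>\<tau>. of_rat (c (ginv \<rho> \<circ> \<tau>)) * \<tau> \<xi>"])
    finally have "\<rho> y = (\<Sum>\<sigma>\<in>G. of_rat (c (ginv \<rho> \<circ> \<sigma>)) * \<sigma> \<xi>)" .
    moreover have "\<rho> y = y" using inv r by blast
    ultimately have e: "y = (\<Sum>\<sigma>\<in>G. of_rat (c (ginv \<rho> \<circ> \<sigma>)) * \<sigma> \<xi>)" by simp
    have "(\<Sum>\<sigma>\<in>G. of_rat (c \<sigma> - c (ginv \<rho> \<circ> \<sigma>)) * \<sigma> \<xi>)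
       = (\<Sum>\<sigma>\<in>G. of_rat (c \<sigma>) * \<sigma> \<xi>) - (\<Sum>\<sigma>\<in>G. of_rat (c (ginv \<rho> \<circ> \<sigma>)) * \<sigma> \<xi>)"
      by (simp add: of_rat_diff left_diff_distrib sum_subtractf)
    also have "\<dots> = 0" using c e by simp
    finally have "(\<Sum>\<sigma>\<in>G. of_rat (c \<sigma> - c (ginv \<rho> \<circ> \<sigma>)) * \<sigma> \<xi>) = 0" .
    then have "\<forall>\<sigma>\<in>G. c \<sigma> - c (ginv \<rho> \<circ> \<sigma>) = 0"
      using normal_indep by (rule_tac allE[OF normal_indep, of "\<lambda>\<sigma>. c \<sigma> - c (ginv \<rho> \<circ> \<sigma>)"]) blast
    then have "c \<rho> - c (ginv \<rho> \<circ> \<rho>) = 0" using r by blast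
    then show ?thesis using grp_inv_left[OF r] by simp
  qed
  have "y = (\<Sum>\<sigma>\<in>G. of_rat (c id) * \<sigma> \<xi>)" unfolding c by (intro sum.cong refl) (simp add: ceq)
  then show ?thesis by (auto simp: sum_distrib_left)
qed

lemma fixed_imp_Rats:
  assumes y: "y \<in> L" and inv: "\<forall>\<rho>\<in>G. \<rho> y = y"
  shows "y \<in> \<rat>"
proof -
  obtain r where r: "y = of_rat r * (\<Sum>\<sigma>\<in>G. \<sigma> \<xi>)" using fixed_eq_rat_multiple[OF y inv] by blast
  obtain r1 where r1: "1 = of_rat r1 * (\<Sum>\<sigma>\<in>G. \<sigma> \<xi>)"
    using fixed_eq_rat_multiple[of 1] by (auto simp: aut_1)
  then have "r1 \<noteq> 0" by auto
  then have "(\<Sum>\<sigma>\<in>G. \<sigma> \<xi>) = of_rat (1 / r1)" using r1 by (simp add: of_rat_divide field_simps)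
  then show ?thesis unfolding r by (simp add: of_rat_mult[symmetric])
qed

lemma aut_nonzero: "\<sigma> \<in> G \<Longrightarrow> x \<in> L \<Longrightarrow> x \<noteq> 0 \<Longrightarrow> \<sigma> x \<noteq> 0"
  using aut_inj[where \<sigma>=\<sigma> and L=L and x=x and y=0] aut_0[where \<sigma>=\<sigma> and z=\<xi>] by auto

definition galois_norm :: "complex \<Rightarrow> complex" where
  "galois_norm x = (\<Prod>\<sigma>\<in>G. \<sigma> x)"

lemma galois_norm_Rats:
  assumes x: "x \<in> L" shows "galois_norm x \<in> \<rat>"
proof (rule fixed_imp_Rats)
  show "galois_norm x \<in> L" unfolding galois_norm_def using x aut_in by (intro QQ_adj_prod) blast
  show "\<forall>\<rho>\<in>G. \<rho> (galois_norm x) = galois_norm x"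
  proof
    fix \<rho> assume r: "\<rho> \<in> G"
    have "\<rho> (galois_norm x) = (\<Prod>\<sigma>\<in>G. (\<rho> \<circ> \<sigma>) x)"
      unfolding galois_norm_def by (simp add: aut_prod[OF r] x aut_in)
    also have "\<dots> = galois_norm x" unfolding galois_norm_def by (rule prod_comp_left[OF r])
    finally show "\<rho> (galois_norm x) = galois_norm x" .
  qed
qed

lemma galois_norm_eq_mult: "galois_norm x = x * (\<Prod>\<sigma>\<in>G - {id}. \<sigma> x)"
  unfolding galois_norm_def using finite_G id_G by (simp add: prod.remove)

lemma galois_norm_nonzero: "x \<in> L \<Longrightarrow> x \<noteq> 0 \<Longrightarrow> galois_norm x \<noteq> 0"
  unfolding galois_norm_def using finite_G aut_nonzero by auto

lemma QQ_adj_inverse: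
  assumes x: "x \<in> L" and nz: "x \<noteq> 0"
  shows "inverse x \<in> L"
proof -
  obtain r where r: "galois_norm x = of_rat r" using galois_norm_Rats[OF x] by (auto elim: Rats_cases)
  then have "r \<noteq> 0" using galois_norm_nonzero[OF x nz] by auto
  then have "inverse x = (\<Prod>\<sigma>\<in>G - {id}. \<sigma> x) * of_rat (1 / r)"
    using r nz galois_norm_eq_mult[of x] by (simp add: of_rat_divide field_simps)
  also have "\<dots> \<in> L" using x aut_in by (intro QQ_adj_mult QQ_adj_prod QQ_adj_of_rat) auto
  finally show ?thesis .
qed

lemma QQ_adj_divide: "x \<in> L \<Longrightarrow> y \<in> L \<Longrightarrow> x / y \<in> L"
  by (cases "y = 0") (auto simp: divide_inverse intro!: QQ_adj_mult QQ_adj_inverse)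

lemma power_basis_repr:
  assumes x: "x \<in> L"
  shows "\<exists>q :: nat \<Rightarrow> rat. x = (\<Sum>i<d. of_rat (q i) * \<xi> ^ i)"
proof -
  obtain p where p: "x = poly (map_poly of_rat p) \<xi>" using x unfolding QQ_adj_iff by blast
  define Fq :: "rat poly" where "Fq = map_poly of_int F"
  have Fq0: "Fq \<noteq> 0" using degree_pos by (auto simp: Fq_def)
  have dFq: "degree Fq = d" by (simp add: Fq_def degree_map_poly)
  have FqX: "poly (map_poly of_rat Fq) \<xi> = 0"
  proof -
    have "map_poly (of_rat :: rat \<Rightarrow> complex) Fq = map_poly of_int F"
      by (simp add: Fq_def map_poly_map_poly o_def)
    then show ?thesis using root by simp
  qed
  define r where "r = p mod Fq"
  have "p = Fq * (p div Fq) + r" by (simp add: r_def)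
  then have "poly (map_poly of_rat p) \<xi> = poly (map_poly of_rat (Fq * (p div Fq) + r)) \<xi>" by simp
  also have "\<dots> = poly (map_poly of_rat Fq) \<xi> * poly (map_poly of_rat (p div Fq)) \<xi> + poly (map_poly of_rat r) \<xi>"
    by (simp only: of_rat_poly_hom.hom_add of_rat_poly_hom.hom_mult poly_add poly_mult)
  finally have "x = poly (map_poly of_rat r) \<xi>" using p FqX by simp
  moreover have dr: "degree r < d \<or> r = 0" using degree_mod_less[of Fq p] Fq0 dFq by (auto simp: r_def)
  have "poly (map_poly of_rat r) \<xi> = (\<Sum>i<d. of_rat (coeff r i) * \<xi> ^ i)"
  proof -
    have "poly (map_poly of_rat r) \<xi> = (\<Sum>i\<le>degree r. of_rat (coeff r i) * \<xi> ^ i)"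
      by (rule poly_of_rat_sum)
    also have "\<dots> = (\<Sum>i<d. of_rat (coeff r i) * \<xi> ^ i)"
    proof (rule sum.mono_neutral_left)
      show "{..degree r} \<subseteq> {..<d}" using dr degree_pos by auto
      show "\<forall>i\<in>{..<d} - {..degree r}. of_rat (coeff r i) * \<xi> ^ i = 0"
        by (auto simp: coeff_eq_0)
    qed auto
    finally show ?thesis .
  qed
  ultimately show ?thesis by blast
qed

end

lemma add_power_prime:
  fixes x y :: "'a :: comm_ring_1"
  assumes p: "prime p"
  shows "(x + y) ^ p = x ^ p + y ^ p + of_nat p * (\<Sum>k\<in>{1..<p}. of_nat ((p choose k) div p) * x ^ k * y ^ (p - k))"
proof -
  have p1: "p > 1" using p prime_gt_1_nat by blast
  have "(x + y) ^ p = (\<Sum>k\<le>p. of_nat (p choose k) * x ^ k * y ^ (p - k))"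
    by (simp add: binomial_ring)
  also have "{..p} = insert 0 (insert p {1..<p})" using p1 by auto
  also have "(\<Sum>k\<in>insert 0 (insert p {1..<p}). of_nat (p choose k) * x ^ k * y ^ (p - k))
      = y ^ p + (x ^ p + (\<Sum>k\<in>{1..<p}. of_nat (p choose k) * x ^ k * y ^ (p - k)))"
    using p1 by (simp add: sum.insert)
  also have "(\<Sum>k\<in>{1..<p}. of_nat (p choose k) * x ^ k * y ^ (p - k))
      = (\<Sum>k\<in>{1..<p}. of_nat p * (of_nat ((p choose k) div p) * x ^ k * y ^ (p - k)))"
  proof (intro sum.cong refl)
    fix k assume k: "k \<in> {1..<p}"
    have "p dvd (p choose k)" using k p1 by (intro dvd_choose_prime p) auto
    then have "p choose k = p * ((p choose k) div p)" by simp
    then have "(of_nat (p choose k) :: 'a) = of_nat p * of_nat ((p choose k) div p)"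
      by (metis of_nat_mult)
    then show "of_nat (p choose k) * x ^ k * y ^ (p - k) = of_nat p * (of_nat ((p choose k) div p) * x ^ k * y ^ (p - k))"
      by (simp add: algebra_simps)
  qed
  finally show ?thesis by (simp add: sum_distrib_left algebra_simps)
qed

lemma prime_dvd_power_minus_self:
  assumes p: "prime p"
  shows "int p dvd c ^ p - c"
proof -
  have nat_case: "int p dvd int n ^ p - int n" for n
  proof (induction n)
    case 0 then show ?case using p by (simp add: prime_gt_0_nat zero_power)
  next
    case (Suc n)
    obtain W where W: "(int n + 1) ^ p = int n ^ p + 1 ^ p + int p * W"
      using add_power_prime[OF p, of "int n" 1] by blast
    have "int (Suc n) ^ p - int (Suc n) = (int n + 1) ^ p - (int n + 1)" by (simp add: add.commute)
    also have "\<dots> = (int n ^ p - int n) + int p * W" unfolding W by simp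
    finally have e: "int (Suc n) ^ p - int (Suc n) = (int n ^ p - int n) + int p * W" .
    have "int p dvd (int n ^ p - int n) + int p * W" using Suc by simp
    then show ?case by (subst e)
  qed
  show ?thesis
  proof (cases "c \<ge> 0")
    case True then show ?thesis using nat_case[of "nat c"] by simp
  next
    case False
    define m where "m = nat (-c)"
    have c: "c = - int m" using False by (simp add: m_def)
    show ?thesis
    proof (cases "p = 2")
      case True
      have "int p dvd int m ^ p - int m" by (rule nat_case)
      then have "2 dvd int m ^ 2 - int m" using True by simp
      then have "2 dvd (int m ^ 2 - int m) + 2 * int m" by simp
      then show ?thesis using True c by (simp add: algebra_simps)
    next
      case False
      then have "odd p" using p prime_odd_nat prime_ge_2_nat by (metis le_neq_implies_less)
      then have "c ^ p - c = - (int m ^ p - int m)" using c by (simp add: power_minus_odd)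
      then show ?thesis using nat_case[of m] by (metis dvd_minus_iff)
    qed
  qed
qed

section \<open>Ideals of the ring of integers\<close>

definition is_ideal :: "complex set \<Rightarrow> complex set \<Rightarrow> bool" where
  "is_ideal R P \<longleftrightarrow> P \<subseteq> R \<and> 0 \<in> P \<and> (\<forall>x\<in>P. \<forall>y\<in>P. x + y \<in> P) \<and> (\<forall>x\<in>P. \<forall>y\<in>R. y * x \<in> P)"

lemma prime_ideal_of_iff: "prime_ideal_of R P \<longleftrightarrow> is_ideal R P \<and> 1 \<notin> P \<and>
      (\<forall>x\<in>R. \<forall>y\<in>R. x * y \<in> P \<longrightarrow> x \<in> P \<or> y \<in> P)"
  unfolding prime_ideal_of_def is_ideal_def by blast

context normal_basis_field
begin

abbreviation R :: "complex set" where "R \<equiv> ring_of_ints L"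

lemma R_iff: "x \<in> R \<longleftrightarrow> x \<in> L \<and> alg_int x" unfolding ring_of_ints_def by auto
lemma R_add[intro]: "x \<in> R \<Longrightarrow> y \<in> R \<Longrightarrow> x + y \<in> R" by (auto simp: R_iff intro: alg_int_add)
lemma R_mult[intro]: "x \<in> R \<Longrightarrow> y \<in> R \<Longrightarrow> x * y \<in> R" by (auto simp: R_iff intro: alg_int_mult)
lemma R_uminus[intro]: "x \<in> R \<Longrightarrow> - x \<in> R" by (auto simp: R_iff intro: alg_int_uminus)
lemma R_diff[intro]: "x \<in> R \<Longrightarrow> y \<in> R \<Longrightarrow> x - y \<in> R" by (auto simp: R_iff intro: alg_int_diff)
lemma R_of_int[simp,intro]: "of_int k \<in> R" by (auto simp: R_iff)
lemma R_of_nat[simp,intro]: "of_nat k \<in> R" by (auto simp: R_iff)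
lemma R_0[simp,intro]: "0 \<in> R" and R_1[simp,intro]: "1 \<in> R" by (auto simp: R_iff)
lemma R_power[intro]: "x \<in> R \<Longrightarrow> x ^ n \<in> R" by (induction n) auto
lemma R_sum[intro]: "(\<And>i. i \<in> I \<Longrightarrow> f i \<in> R) \<Longrightarrow> sum f I \<in> R"
  by (induction I rule: infinite_finite_induct) auto
lemma R_prod[intro]: "(\<And>i. i \<in> I \<Longrightarrow> f i \<in> R) \<Longrightarrow> prod f I \<in> R"
  by (induction I rule: infinite_finite_induct) auto
lemma R_aut: "\<sigma> \<in> G \<Longrightarrow> x \<in> R \<Longrightarrow> \<sigma> x \<in> R"
  by (auto simp: R_iff aut_in aut_alg_int)
lemma R_conj: "\<sigma> \<in> G \<Longrightarrow> \<sigma> \<xi> \<in> R" by (auto simp: R_iff conj_in_L alg_int_conj)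
lemma R_xi: "\<xi> \<in> R" using R_conj[OF id_G] by simp

context
  fixes P :: "complex set" assumes P: "is_ideal R P"
begin

lemma ideal_subset: "x \<in> P \<Longrightarrow> x \<in> R" using P unfolding is_ideal_def by auto
lemma ideal_0: "0 \<in> P" using P unfolding is_ideal_def by auto
lemma ideal_add: "x \<in> P \<Longrightarrow> y \<in> P \<Longrightarrow> x + y \<in> P" using P unfolding is_ideal_def by auto
lemma ideal_mult_left: "x \<in> P \<Longrightarrow> y \<in> R \<Longrightarrow> y * x \<in> P" using P unfolding is_ideal_def by auto
lemma ideal_mult_right: "x \<in> P \<Longrightarrow> y \<in> R \<Longrightarrow> x * y \<in> P" using ideal_mult_left by (simp add: mult.commute)
lemma ideal_uminus: "x \<in> P \<Longrightarrow> - x \<in> P" using ideal_mult_left[of x "-1"] by auto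
lemma ideal_sum: "(\<And>i. i \<in> I \<Longrightarrow> f i \<in> P) \<Longrightarrow> sum f I \<in> P"
  by (induction I rule: infinite_finite_induct) (auto intro: ideal_0 ideal_add)

definition cong_ideal :: "complex \<Rightarrow> complex \<Rightarrow> bool" where "cong_ideal u v \<longleftrightarrow> u - v \<in> P"

lemma cong_ideal_refl: "cong_ideal u u" by (simp add: cong_ideal_def ideal_0)
lemma cong_ideal_sym: "cong_ideal u v \<Longrightarrow> cong_ideal v u" unfolding cong_ideal_def using ideal_uminus by force
lemma cong_ideal_trans: "cong_ideal u v \<Longrightarrow> cong_ideal v w \<Longrightarrow> cong_ideal u w"
  unfolding cong_ideal_def using ideal_add by force
lemma cong_ideal_add: "cong_ideal u v \<Longrightarrow> cong_ideal u' v' \<Longrightarrow> cong_ideal (u + u') (v + v')"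
  unfolding cong_ideal_def using ideal_add by (force simp: algebra_simps)
lemma cong_ideal_mult: "cong_ideal u v \<Longrightarrow> cong_ideal u' v' \<Longrightarrow> u \<in> R \<Longrightarrow> v' \<in> R \<Longrightarrow> cong_ideal (u * u') (v * v')"
proof -
  assume a: "cong_ideal u v" "cong_ideal u' v'" "u \<in> R" "v' \<in> R"
  have "u * u' - v * v' = u * (u' - v') + (u - v) * v'" by (simp add: algebra_simps)
  then show ?thesis using a unfolding cong_ideal_def by (metis ideal_add ideal_mult_left ideal_mult_right)
qed
lemma cong_ideal_power: "cong_ideal u v \<Longrightarrow> u \<in> R \<Longrightarrow> v \<in> R \<Longrightarrow> cong_ideal (u ^ n) (v ^ n)"
  by (induction n) (auto simp: cong_ideal_refl intro: cong_ideal_mult)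
lemma cong_ideal_sum: "(\<And>i. i \<in> I \<Longrightarrow> cong_ideal (f i) (g i)) \<Longrightarrow> cong_ideal (sum f I) (sum g I)"
  by (induction I rule: infinite_finite_induct) (auto simp: cong_ideal_refl intro: cong_ideal_add)

context
  fixes p :: nat assumes p: "prime p" and pP: "of_nat p \<in> P"
begin

lemma cong_ideal_power_add: "x \<in> R \<Longrightarrow> y \<in> R \<Longrightarrow> cong_ideal ((x + y) ^ p) (x ^ p + y ^ p)"
proof -
  assume xy: "x \<in> R" "y \<in> R"
  obtain W where W: "(x + y) ^ p = x ^ p + y ^ p + of_nat p * W"
    and WR: "W \<in> R"
    using add_power_prime[OF p, of x y] xy by (metis (no_types, lifting) R_sum R_mult R_power R_of_nat)
  then show ?thesis unfolding cong_ideal_def using ideal_mult_right[OF pP WR] by simp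
qed

lemma cong_ideal_power_sum: "(\<And>i. i \<in> I \<Longrightarrow> f i \<in> R) \<Longrightarrow> cong_ideal ((sum f I) ^ p) (\<Sum>i\<in>I. f i ^ p)"
proof (induction I rule: infinite_finite_induct)
  case (infinite I) then show ?case using p by (simp add: cong_ideal_refl prime_gt_0_nat zero_power)
next
  case empty then show ?case using p by (simp add: cong_ideal_refl prime_gt_0_nat zero_power)
next
  case (insert i I)
  have "cong_ideal ((f i + sum f I) ^ p) (f i ^ p + (sum f I) ^ p)"
    using insert by (intro cong_ideal_power_add) auto
  moreover have "cong_ideal (f i ^ p + (sum f I) ^ p) (f i ^ p + (\<Sum>i\<in>I. f i ^ p))"
    using insert by (intro cong_ideal_add cong_ideal_refl) auto
  ultimately show ?case using insert by (auto intro: cong_ideal_trans)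
qed

lemma cong_ideal_power_of_int: "cong_ideal (of_int c ^ p) (of_int c)"
proof -
  obtain k where "c ^ p - c = int p * k" using prime_dvd_power_minus_self[OF p, of c] by (auto elim: dvdE)
  then have "(of_int c ^ p - of_int c :: complex) = of_nat p * of_int k"
    by (metis of_int_diff of_int_mult of_int_of_nat_eq of_int_power)
  then show ?thesis unfolding cong_ideal_def using ideal_mult_right[OF pP, of "of_int k"] by simp
qed

lemma cong_ideal_power_int_poly:
  assumes x: "x \<in> R"
  shows "cong_ideal ((\<Sum>i<n. of_int (z i) * x ^ i) ^ p) (\<Sum>i<n. of_int (z i) * (x ^ p) ^ i)"
proof -
  have "cong_ideal ((\<Sum>i<n. of_int (z i) * x ^ i) ^ p) (\<Sum>i<n. (of_int (z i) * x ^ i) ^ p)"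
    using x by (intro cong_ideal_power_sum) auto
  moreover have "cong_ideal (\<Sum>i<n. (of_int (z i) * x ^ i) ^ p) (\<Sum>i<n. of_int (z i) * (x ^ p) ^ i)"
  proof (intro cong_ideal_sum)
    fix i
    have "(of_int (z i) * x ^ i) ^ p = of_int (z i) ^ p * (x ^ p) ^ i"
      by (simp add: power_mult_distrib power_mult[symmetric] mult.commute)
    moreover have "cong_ideal (of_int (z i) ^ p * (x ^ p) ^ i) (of_int (z i) * (x ^ p) ^ i)"
      using x by (intro cong_ideal_mult cong_ideal_power_of_int cong_ideal_refl) auto
    ultimately show "cong_ideal ((of_int (z i) * x ^ i) ^ p) (of_int (z i) * (x ^ p) ^ i)" by simp
  qed
  ultimately show ?thesis by (rule cong_ideal_trans)
qed

lemma prime_dvd_if_of_int_in_ideal: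
  assumes one: "1 \<notin> P" and k: "of_int k \<in> P"
  shows "int p dvd k"
proof (rule ccontr)
  assume "\<not> int p dvd k"
  then have "coprime (int p) k" using p by (simp add: prime_imp_coprime_int)
  then have "gcd k (int p) = 1" by (simp add: coprime_commute coprime_iff_gcd_eq_1[symmetric])
  then obtain u v where uv: "u * k + v * int p = 1" using bezout_int[of k "int p"] by auto
  have "of_int u * of_int k + of_int v * of_nat p \<in> P"
    using k pP by (intro ideal_add ideal_mult_left) auto
  moreover have "(of_int u * of_int k + of_int v * of_nat p :: complex) = 1"
    using arg_cong[OF uv, of "of_int :: int \<Rightarrow> complex"] by simp
  ultimately show False using one by simp
qed

end
end

lemma inverse_prime_notin_ints:
  assumes p: "prime p" shows "inverse (of_nat p :: complex) \<notin> R"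
proof
  assume "inverse (of_nat p :: complex) \<in> R"
  then have a: "alg_int (inverse (of_nat p :: complex))" by (simp add: R_iff)
  have "inverse (of_nat p :: complex) = of_rat (inverse (of_nat p))" by (simp add: of_rat_inverse)
  then have "inverse (of_nat p :: complex) \<in> \<rat>" by simp
  with a have "inverse (of_nat p :: complex) \<in> \<int>" by (rule alg_int_Rats_imp_Ints)
  then obtain m where m: "inverse (of_nat p :: complex) = of_int m" by (auto elim: Ints_cases)
  have p1: "p > 1" using p prime_gt_1_nat by blast
  then have "(of_nat p :: complex) * of_int m = 1" using m by (simp add: field_simps)
  then have "int p * m = 1" by (metis of_int_1 of_int_eq_iff of_int_mult of_int_of_nat_eq)
  then have "int p dvd 1" by (metis dvd_triv_left)
  then show False using p1 by simp
qed

lemma principal_ideal_prime: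
  assumes p: "prime p"
  shows "is_ideal R {of_nat p * r | r. r \<in> R}" "1 \<notin> {of_nat p * r | r. r \<in> R}"
proof -
  show "is_ideal R {of_nat p * r | r. r \<in> R}" unfolding is_ideal_def
  proof (intro conjI ballI)
    show "{of_nat p * r |r. r \<in> R} \<subseteq> R" by auto
    show "0 \<in> {of_nat p * r |r. r \<in> R}" by (auto intro!: exI[of _ 0])
    fix x y assume "x \<in> {of_nat p * r |r. r \<in> R}" "y \<in> {of_nat p * r |r. r \<in> R}"
    then obtain r s where "x = of_nat p * r" "y = of_nat p * s" "r \<in> R" "s \<in> R" by auto
    then show "x + y \<in> {of_nat p * r |r. r \<in> R}" by (auto intro!: exI[of _ "r + s"] simp: algebra_simps)
  next
    fix x y assume "x \<in> {of_nat p * r |r. r \<in> R}" "y \<in> R"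
    then obtain r where "x = of_nat p * r" "r \<in> R" by auto
    then show "y * x \<in> {of_nat p * r |r. r \<in> R}" using \<open>y \<in> R\<close> by (auto intro!: exI[of _ "y * r"] simp: algebra_simps)
  qed
  show "1 \<notin> {of_nat p * r | r. r \<in> R}"
  proof
    assume "1 \<in> {of_nat p * r | r. r \<in> R}"
    then obtain r where r: "1 = of_nat p * r" "r \<in> R" by auto
    moreover have "(of_nat p :: complex) \<noteq> 0" using p by (simp add: prime_gt_0_nat)
    ultimately have "r = inverse (of_nat p)" by (simp add: field_simps)
    then show False using r inverse_prime_notin_ints[OF p] by simp
  qed
qed

lemma Union_chain_proper_ideals:
  assumes C: "C \<noteq> {}" "subset.chain {P. is_ideal R P \<and> a \<in> P \<and> 1 \<notin> P} C"
  shows "\<Union>C \<in> {P. is_ideal R P \<and> a \<in> P \<and> 1 \<notin> P}"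
proof -
  define S where "S = {P. is_ideal R P \<and> a \<in> P \<and> 1 \<notin> P}"
  have CS: "C \<subseteq> S" and lin: "\<forall>X\<in>C. \<forall>Y\<in>C. X \<subseteq> Y \<or> Y \<subseteq> X"
    using C(2) unfolding subset_chain_def S_def by auto
  have "is_ideal R (\<Union>C)" unfolding is_ideal_def
  proof (intro conjI ballI)
    show "\<Union>C \<subseteq> R" using CS unfolding S_def is_ideal_def by blast
    show "0 \<in> \<Union>C" using CS C(1) unfolding S_def is_ideal_def by blast
    fix x y assume "x \<in> \<Union>C" "y \<in> \<Union>C"
    then obtain X Y where XY: "X \<in> C" "Y \<in> C" "x \<in> X" "y \<in> Y" by auto
    show "x + y \<in> \<Union>C"
    proof (cases "X \<subseteq> Y")
      case True
      then have "x + y \<in> Y" using XY CS unfolding S_def is_ideal_def by blast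
      then show ?thesis using XY by blast
    next
      case False
      then have "Y \<subseteq> X" using lin XY by blast
      then have "x + y \<in> X" using XY CS unfolding S_def is_ideal_def by blast
      then show ?thesis using XY by blast
    qed
  next
    fix x y assume "x \<in> \<Union>C" "y \<in> R"
    then obtain X where "X \<in> C" "x \<in> X" by auto
    then have "y * x \<in> X" using \<open>y \<in> R\<close> CS unfolding S_def is_ideal_def by blast
    then show "y * x \<in> \<Union>C" using \<open>X \<in> C\<close> by blast
  qed
  moreover have "a \<in> \<Union>C" using CS C(1) unfolding S_def by blast
  moreover have "1 \<notin> \<Union>C" using CS unfolding S_def by blast
  ultimately show ?thesis unfolding S_def by blast
qed

lemma one_in_ideal_extension:
  assumes M: "is_ideal R M" "1 \<notin> M"
    and max: "\<And>J. is_ideal R J \<Longrightarrow> 1 \<notin> J \<Longrightarrow> M \<subseteq> J \<Longrightarrow> J = M"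
    and x: "x \<in> R" "x \<notin> M"
  shows "\<exists>a\<in>M. \<exists>r\<in>R. 1 = a + r * x"
proof (rule ccontr)
  let ?J = "{a + r * x | a r. a \<in> M \<and> r \<in> R}"
  assume "\<not> (\<exists>a\<in>M. \<exists>r\<in>R. 1 = a + r * x)"
  then have n1: "1 \<notin> ?J" by blast
  have "is_ideal R ?J" unfolding is_ideal_def
  proof (intro conjI ballI)
    show "?J \<subseteq> R" using M(1) x by (auto intro!: R_add R_mult dest: ideal_subset[OF M(1)])
    show "0 \<in> ?J" using ideal_0[OF M(1)] by (auto intro!: exI[of _ 0])
    fix u v assume "u \<in> ?J" "v \<in> ?J"
    then obtain a r b s where "u = a + r * x" "v = b + s * x" "a \<in> M" "b \<in> M" "r \<in> R" "s \<in> R" by auto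
    moreover have "u + v = (a + b) + (r + s) * x" using calculation by (simp add: algebra_simps)
    moreover have "a + b \<in> M" using calculation by (simp add: ideal_add[OF M(1)])
    moreover have "r + s \<in> R" using calculation by auto
    ultimately show "u + v \<in> ?J" by blast
  next
    fix u y assume "u \<in> ?J" "y \<in> R"
    then obtain a r where "u = a + r * x" "a \<in> M" "r \<in> R" by auto
    moreover have "y * u = (y * a) + (y * r) * x" using calculation by (simp add: algebra_simps)
    moreover have "y * a \<in> M" using calculation \<open>y \<in> R\<close> by (simp add: ideal_mult_left[OF M(1)])
    moreover have "y * r \<in> R" using calculation \<open>y \<in> R\<close> by auto
    ultimately show "y * u \<in> ?J" by blast
  qed
  moreover have "M \<subseteq> ?J"
  proof
    fix m assume "m \<in> M"
    moreover have "m = m + 0 * x" by simp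
    ultimately show "m \<in> ?J" using R_0 by blast
  qed
  ultimately have "?J = M" using max n1 by blast
  moreover have "x = 0 + 1 * x" by simp
  then have "x \<in> ?J" using ideal_0[OF M(1)] R_1 by blast
  ultimately show False using x by blast
qed

lemma maximal_ideal_prime:
  assumes M: "is_ideal R M" "1 \<notin> M"
    and max: "\<And>J. is_ideal R J \<Longrightarrow> 1 \<notin> J \<Longrightarrow> M \<subseteq> J \<Longrightarrow> J = M"
  shows "prime_ideal_of R M"
  unfolding prime_ideal_of_iff
proof (intro conjI ballI impI M)
  fix x y assume xy: "x \<in> R" "y \<in> R" "x * y \<in> M"
  show "x \<in> M \<or> y \<in> M"
  proof (rule ccontr)
    assume "\<not> (x \<in> M \<or> y \<in> M)"
    then have "x \<notin> M" "y \<notin> M" by auto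
    then obtain a r b s where ab: "1 = a + r * x" "a \<in> M" "r \<in> R" "1 = b + s * y" "b \<in> M" "s \<in> R"
      using one_in_ideal_extension[OF M max xy(1)] one_in_ideal_extension[OF M max xy(2)] by blast
    have "1 = (a + r * x) * (b + s * y)" using ab by simp
    also have "\<dots> = a * (b + s * y) + (r * x) * b + (r * s) * (x * y)" by (simp add: algebra_simps)
    also have "\<dots> \<in> M"
    proof -
      have bR: "b \<in> R" using ab ideal_subset[OF M(1)] by blast
      have "a * (b + s * y) \<in> M" using ab xy bR by (rule_tac ideal_mult_right[OF M(1)]) auto
      moreover have "(r * x) * b \<in> M" using ab xy by (rule_tac ideal_mult_left[OF M(1)]) auto
      moreover have "(r * s) * (x * y) \<in> M" using ab xy by (rule_tac ideal_mult_left[OF M(1)]) auto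
      ultimately show ?thesis by (intro ideal_add[OF M(1)])
    qed
    finally show False using M(2) by simp
  qed
qed

text \<open>Zorn's lemma: the ideal \<open>p O\<^sub>L\<close> lies in a maximal proper ideal, which is prime.\<close>

lemma prime_ideal_above:
  assumes p: "prime p"
  shows "\<exists>P. prime_ideal_of R P \<and> of_nat p \<in> P"
proof -
  define S where "S = {P. is_ideal R P \<and> of_nat p \<in> P \<and> 1 \<notin> P}"
  have "{of_nat p * r | r. r \<in> R} \<in> S"
    using principal_ideal_prime[OF p] unfolding S_def by (auto intro!: exI[of _ 1])
  then have "S \<noteq> {}" by blast
  moreover have "\<Union>C \<in> S" if "C \<noteq> {}" "subset.chain S C" for C
    using Union_chain_proper_ideals that unfolding S_def by blast
  ultimately obtain M where M: "M \<in> S" and max: "\<forall>X\<in>S. M \<subseteq> X \<longrightarrow> X = M"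
    using subset_Zorn_nonempty[of S] by blast
  have MI: "is_ideal R M" "of_nat p \<in> M" "1 \<notin> M" using M unfolding S_def by auto
  have "prime_ideal_of R M"
    by (rule maximal_ideal_prime[OF MI(1,3)]) (use max MI(2) in \<open>auto simp: S_def\<close>)
  then show ?thesis using MI by blast
qed

lemma prod_linear_factors_dvd:
  fixes q :: "complex poly"
  assumes "finite S" "\<And>r. r \<in> S \<Longrightarrow> poly q r = 0"
  shows "(\<Prod>r\<in>S. [:-r, 1:]) dvd q"
  using assms
proof (induction S arbitrary: q rule: finite_induct)
  case empty then show ?case by simp
next
  case (insert a S)
  obtain h where h: "q = (\<Prod>r\<in>S. [:-r, 1:]) * h" using insert by (metis dvdE insertCI)
  have "poly (\<Prod>r\<in>S. [:-r, 1:]) a \<noteq> 0" using insert(1,2) by (auto simp: poly_prod)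
  moreover have "poly q a = 0" using insert by auto
  ultimately have "poly h a = 0" using h by simp
  then obtain h' where h': "h = [:-a, 1:] * h'" using poly_eq_0_iff_dvd by (metis dvdE)
  have "(\<Prod>r\<in>insert a S. [:-r, 1:]) = [:-a, 1:] * (\<Prod>r\<in>S. [:-r, 1:])"
    using insert(1,2) by simp
  then have "q = (\<Prod>r\<in>insert a S. [:-r, 1:]) * h'" using h h' by (simp only: mult_ac)
  then show ?case by (rule dvdI)
qed

lemma F_eq_prod_conj: "map_poly of_int F = (\<Prod>\<sigma>\<in>G. [:-\<sigma> \<xi>, 1:])"
proof -
  let ?Fc = "map_poly (of_int :: int \<Rightarrow> complex) F"
  let ?Q = "\<Prod>\<sigma>\<in>G. [:-\<sigma> \<xi>, 1:]"
  have QQ: "?Q = (\<Prod>r\<in>(\<lambda>\<sigma>. \<sigma> \<xi>) ` G. [:-r, 1:])"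
    using prod.reindex[OF inj_on_conj, of "\<lambda>r. [:-r, 1:]"] by simp
  have "?Q dvd ?Fc" unfolding QQ using finite_G conj_root by (intro prod_linear_factors_dvd) auto
  then obtain h where h: "?Fc = ?Q * h" by (elim dvdE)
  have Fc0: "?Fc \<noteq> 0" using degree_pos by auto
  have dQ: "degree ?Q = d"
    using galois by (subst degree_prod_eq_sum_degree) auto
  have lQ: "lead_coeff ?Q = 1" by (simp add: lead_coeff_prod)
  have h0: "h \<noteq> 0" using h Fc0 by auto
  have Q0: "?Q \<noteq> 0" using h Fc0 by auto
  have "degree ?Fc = degree ?Q + degree h" using h degree_mult_eq[OF Q0 h0] by simp
  then have "degree h = 0" using dQ by (simp add: degree_map_poly)
  then obtain c where c: "h = [:c:]" by (elim degree_eq_zeroE)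
  have "lead_coeff ?Fc = 1" using monic by (simp add: degree_map_poly coeff_map_poly)
  moreover have "lead_coeff ?Fc = lead_coeff ?Q * lead_coeff h" using h by (simp only: lead_coeff_mult)
  ultimately have "lead_coeff ?Q * c = 1" using c by simp
  then have "c = 1" using lQ by simp
  then show ?thesis using h c by (simp add: one_pCons)
qed

lemma prime_ideal_prod:
  assumes P: "prime_ideal_of R P" and S: "finite S" "\<And>i. i \<in> S \<Longrightarrow> f i \<in> R"
    and prod: "prod f S \<in> P"
  shows "\<exists>i\<in>S. f i \<in> P"
  using S prod
proof (induction S rule: finite_induct)
  case empty then show ?case using P by (simp add: prime_ideal_of_def)
next
  case (insert a S)
  have "f a \<in> R" "prod f S \<in> R" "f a * prod f S \<in> P" using insert by auto
  then have "f a \<in> P \<or> prod f S \<in> P" using P unfolding prime_ideal_of_def by blast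
  then show ?case using insert by auto
qed

text \<open>Reducing \<open>F(\<xi>)\<^sup>p = 0\<close> modulo \<open>P\<close> gives \<open>F(\<xi>\<^sup>p) \<equiv> 0\<close>, and \<open>F\<close> splits into the factors \<open>X - \<sigma> \<xi>\<close>.\<close>

lemma conj_cong_xi_power:
  assumes P: "prime_ideal_of R P" and p: "prime p" and pP: "of_nat p \<in> P"
  shows "\<exists>\<sigma>\<in>G. cong_ideal P (\<sigma> \<xi>) (\<xi> ^ p)"
proof -
  have I: "is_ideal R P" using P unfolding prime_ideal_of_iff by auto
  have pe: "poly (map_poly of_int F) y = (\<Sum>i<Suc d. of_int (coeff F i) * y ^ i)" for y :: complex
    by (simp add: poly_altdef degree_map_poly lessThan_Suc_atMost)
  have "cong_ideal P ((\<Sum>i<Suc d. of_int (coeff F i) * \<xi> ^ i) ^ p) (\<Sum>i<Suc d. of_int (coeff F i) * (\<xi> ^ p) ^ i)"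
    by (rule cong_ideal_power_int_poly[OF I p pP R_xi])
  then have "cong_ideal P 0 (poly (map_poly of_int F) (\<xi> ^ p))"
    using root p unfolding pe[symmetric] by (simp add: prime_gt_0_nat zero_power)
  then have "poly (map_poly of_int F) (\<xi> ^ p) \<in> P"
    unfolding cong_ideal_def[OF I] using ideal_uminus[OF I] by force
  then have "(\<Prod>\<sigma>\<in>G. \<xi> ^ p - \<sigma> \<xi>) \<in> P"
    unfolding F_eq_prod_conj by (simp add: poly_prod)
  then obtain \<sigma> where "\<sigma> \<in> G" "\<xi> ^ p - \<sigma> \<xi> \<in> P"
    using prime_ideal_prod[OF P finite_G, of "\<lambda>\<sigma>. \<xi> ^ p - \<sigma> \<xi>"] R_xi R_conj by blast
  then show ?thesis using cong_ideal_sym[OF I] unfolding cong_ideal_def[OF I] by blast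
qed

text \<open>An automorphism acting as \<open>x \<mapsto> x\<^sup>p\<close> on \<open>\<xi>\<close> does so on \<open>\<int>[\<xi>]\<close>, hence on \<open>D \<cdot> O\<^sub>L\<close>;
  dividing by \<open>D\<close> is allowed when \<open>p \<nmid> D\<close>.\<close>

lemma frobenius_on_ints:
  assumes P: "prime_ideal_of R P" and p: "prime p" and pP: "of_nat p \<in> P"
    and Dp: "\<not> int p dvd D"
    and DR: "\<forall>x\<in>R. \<exists>z::nat \<Rightarrow> int. of_int D * x = (\<Sum>i<d. of_int (z i) * \<xi> ^ i)"
    and s: "\<sigma> \<in> G" and cgs: "cong_ideal P (\<sigma> \<xi>) (\<xi> ^ p)"
    and x: "x \<in> R"
  shows "\<sigma> x - x ^ p \<in> P"
proof -
  have I: "is_ideal R P" and one: "1 \<notin> P" and pr: "\<forall>x\<in>R. \<forall>y\<in>R. x * y \<in> P \<longrightarrow> x \<in> P \<or> y \<in> P"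
    using P unfolding prime_ideal_of_iff by auto
  have xL: "x \<in> L" using x by (simp add: R_iff)
  obtain z where z: "of_int D * x = (\<Sum>i<d. of_int (z i) * \<xi> ^ i)" using DR x by blast
  have "\<sigma> (of_int D * x) = of_int D * \<sigma> x" using aut_mult[OF s, of "of_int D" x] xL aut_of_int[OF s] by simp
  moreover have "\<sigma> (\<Sum>i<d. of_int (z i) * \<xi> ^ i) = (\<Sum>i<d. of_int (z i) * \<sigma> \<xi> ^ i)"
    by (subst aut_sum[OF s]) (auto simp: aut_mult[OF s] aut_of_int[OF s] aut_power[OF s] QQ_adj_power)
  ultimately have e1: "of_int D * \<sigma> x = (\<Sum>i<d. of_int (z i) * \<sigma> \<xi> ^ i)" using z by simp
  have c1: "cong_ideal P (\<Sum>i<d. of_int (z i) * \<sigma> \<xi> ^ i) (\<Sum>i<d. of_int (z i) * (\<xi> ^ p) ^ i)"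
    using cgs R_conj[OF s] R_xi
    by (intro cong_ideal_sum[OF I] cong_ideal_mult[OF I] cong_ideal_refl[OF I] cong_ideal_power[OF I]) auto
  have c2: "cong_ideal P ((\<Sum>i<d. of_int (z i) * \<xi> ^ i) ^ p) (\<Sum>i<d. of_int (z i) * (\<xi> ^ p) ^ i)"
    by (rule cong_ideal_power_int_poly[OF I p pP R_xi])
  have c3: "cong_ideal P (of_int D * \<sigma> x) ((of_int D * x) ^ p)"
    using c1 c2 cong_ideal_sym[OF I] cong_ideal_trans[OF I] unfolding e1 z by blast
  have "(of_int D * x) ^ p = of_int D ^ p * x ^ p" by (simp add: power_mult_distrib)
  moreover have "cong_ideal P (of_int D ^ p * x ^ p) (of_int D * x ^ p)"
    using x by (intro cong_ideal_mult[OF I] cong_ideal_power_of_int[OF I p pP] cong_ideal_refl[OF I]) auto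
  ultimately have "cong_ideal P ((of_int D * x) ^ p) (of_int D * x ^ p)" by simp
  with c3 have "cong_ideal P (of_int D * \<sigma> x) (of_int D * x ^ p)" by (rule cong_ideal_trans[OF I])
  then have "of_int D * (\<sigma> x - x ^ p) \<in> P" unfolding cong_ideal_def[OF I] by (simp add: algebra_simps)
  moreover have "\<sigma> x - x ^ p \<in> R" using x R_aut[OF s x] by auto
  moreover have "of_int D \<notin> P" using prime_dvd_if_of_int_in_ideal[OF I p pP one] Dp by blast
  ultimately show "\<sigma> x - x ^ p \<in> P" using pr by auto
qed

lemma frob_set_nonempty:
  assumes p: "prime p" and Dp: "\<not> int p dvd D"
    and DR: "\<forall>x\<in>R. \<exists>z::nat \<Rightarrow> int. of_int D * x = (\<Sum>i<d. of_int (z i) * \<xi> ^ i)"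
  shows "frob_set L G p \<noteq> {}"
proof -
  obtain P where P: "prime_ideal_of R P" and pP: "of_nat p \<in> P" using prime_ideal_above[OF p] by blast
  obtain \<sigma> where s: "\<sigma> \<in> G" and cgs: "cong_ideal P (\<sigma> \<xi>) (\<xi> ^ p)"
    using conj_cong_xi_power[OF P p pP] by blast
  have "\<forall>x\<in>R. \<sigma> x - x ^ p \<in> P" using frobenius_on_ints[OF P p pP Dp DR s cgs] by blast
  then show ?thesis using s P pP unfolding frob_set_def by blast
qed

end

section \<open>Determinants\<close>

lemma det_in_subring:
  fixes A :: "complex mat"
  assumes A: "A \<in> carrier_mat n n"
    and S0: "\<And>k. of_int k \<in> S" and Sadd: "\<And>x y. x \<in> S \<Longrightarrow> y \<in> S \<Longrightarrow> x + y \<in> S"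
    and Smul: "\<And>x y. x \<in> S \<Longrightarrow> y \<in> S \<Longrightarrow> x * y \<in> S"
    and entries: "\<And>i j. i < n \<Longrightarrow> j < n \<Longrightarrow> A $$ (i,j) \<in> S"
  shows "det A \<in> S"
proof -
  have sum: "sum f I \<in> S" if "\<And>i. i \<in> I \<Longrightarrow> f i \<in> S" for f and I :: "'b set"
    using that proof (induction I rule: infinite_finite_induct)
    case (infinite A) then show ?case using S0[of 0] by simp
  next
    case empty then show ?case using S0[of 0] by simp
  qed (auto intro: Sadd)
  have prod: "prod f I \<in> S" if "\<And>i. i \<in> I \<Longrightarrow> f i \<in> S" for f and I :: "'b set"
    using that proof (induction I rule: infinite_finite_induct)
    case (infinite A) then show ?case using S0[of 1] by simp
  next
    case empty then show ?case using S0[of 1] by simp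
  qed (auto intro: Smul)
  have "(\<Sum>p\<in>{p. p permutes {0..<n}}. signof p * (\<Prod>i = 0..<n. A $$ (i, p i))) \<in> S"
  proof (intro sum Smul prod)
    fix p assume p: "p \<in> {p. p permutes {0..<n}}"
    show "signof p \<in> S" using S0[of 1] S0[of "-1"] by (cases "sign p = 1") (auto simp: sign_def)
    fix i assume i: "i \<in> {0..<n}"
    have "p i < n" using p i permutes_in_image by fastforce
    then show "A $$ (i, p i) \<in> S" using i by (intro entries) auto
  qed
  then show ?thesis using det_def'[OF A] by simp
qed

lemma vandermonde_kernel_zero:
  fixes r w :: "nat \<Rightarrow> complex"
  assumes inj: "inj_on r {..<n}" and z: "\<forall>i<n. (\<Sum>s<n. w s * r s ^ i) = 0" and s0: "s0 < n"
  shows "w s0 = 0"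
proof -
  define l where "l = (\<Prod>s\<in>{..<n} - {s0}. [:-r s, 1:])"
  have dl: "degree l = n - 1"
    unfolding l_def using s0 by (subst degree_prod_eq_sum_degree) auto
  have pl: "poly l x = (\<Sum>i<n. coeff l i * x ^ i)" for x
  proof -
    have "poly l x = (\<Sum>i\<le>degree l. coeff l i * x ^ i)" by (simp add: poly_altdef)
    also have "\<dots> = (\<Sum>i<n. coeff l i * x ^ i)"
      by (rule sum.mono_neutral_left) (use dl s0 in \<open>auto simp: coeff_eq_0\<close>)
    finally show ?thesis .
  qed
  have "0 = (\<Sum>i<n. coeff l i * (\<Sum>s<n. w s * r s ^ i))" using z by simp
  also have "\<dots> = (\<Sum>i<n. \<Sum>s<n. w s * (coeff l i * r s ^ i))"
    by (simp add: sum_distrib_left mult.left_commute)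
  also have "\<dots> = (\<Sum>s<n. \<Sum>i<n. w s * (coeff l i * r s ^ i))"
    by (rule sum.swap)
  also have "\<dots> = (\<Sum>s<n. w s * poly l (r s))"
    unfolding pl by (simp add: sum_distrib_left)
  also have "\<dots> = (\<Sum>s<n. if s = s0 then w s0 * poly l (r s0) else 0)"
  proof (intro sum.cong refl)
    fix s assume "s \<in> {..<n}"
    show "w s * poly l (r s) = (if s = s0 then w s0 * poly l (r s0) else 0)"
      by (cases "s = s0") (use \<open>s \<in> {..<n}\<close> in \<open>auto simp: l_def poly_prod\<close>)
  qed
  also have "\<dots> = w s0 * poly l (r s0)" using s0 by simp
  finally have "w s0 * poly l (r s0) = 0" by simp
  moreover have "poly l (r s0) \<noteq> 0"
    unfolding l_def poly_prod using inj s0 by (auto simp: inj_on_def)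
  ultimately show ?thesis by simp
qed

lemma det_vandermonde_nonzero:
  fixes r :: "nat \<Rightarrow> complex"
  assumes inj: "inj_on r {..<n}"
  shows "det (mat n n (\<lambda>(s, i). r s ^ i)) \<noteq> 0"
proof
  define V where "V = mat n n (\<lambda>(s, i). r s ^ i)"
  have V: "V \<in> carrier_mat n n" by (simp add: V_def)
  assume "det (mat n n (\<lambda>(s, i). r s ^ i)) = 0"
  then have "det V = 0" by (simp add: V_def)
  then have "det (transpose_mat V) = 0" using det_transpose[OF V] by simp
  then obtain w where w: "w \<in> carrier_vec n" "w \<noteq> 0\<^sub>v n" "transpose_mat V *\<^sub>v w = 0\<^sub>v n"
    using det_0_iff_vec_prod_zero_field[of "transpose_mat V" n] V by auto
  have "\<forall>i<n. (\<Sum>s<n. w $ s * r s ^ i) = 0"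
  proof (intro allI impI)
    fix i assume i: "i < n"
    have "(transpose_mat V *\<^sub>v w) $ i = 0" using w(3) i by simp
    then show "(\<Sum>s<n. w $ s * r s ^ i) = 0" using i w(1) V
      by (simp add: V_def mult_mat_vec_def scalar_prod_def lessThan_atLeast0 mult.commute)
  qed
  then have "\<forall>s<n. w $ s = 0" using vandermonde_kernel_zero[OF inj] by blast
  then have "w = 0\<^sub>v n" using w(1) by (intro eq_vecI) auto
  with w(2) show False by simp
qed

context normal_basis_field
begin

lemma det_in_L: "A \<in> carrier_mat n n \<Longrightarrow> (\<And>i j. i < n \<Longrightarrow> j < n \<Longrightarrow> A $$ (i,j) \<in> L) \<Longrightarrow> det A \<in> L"
  by (rule det_in_subring) auto

lemma det_alg_int: "A \<in> carrier_mat n n \<Longrightarrow> (\<And>i j. i < n \<Longrightarrow> j < n \<Longrightarrow> alg_int (A $$ (i,j))) \<Longrightarrow> alg_int (det A)"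
  by (rule det_in_subring[where S = "Collect alg_int", simplified]) (auto intro: alg_int_add alg_int_mult)

lemma alg_int_clear_denominator:
  assumes x: "x \<in> L" "alg_int x" "x \<noteq> 0"
  shows "\<exists>D::int. D \<noteq> 0 \<and> (\<forall>y. alg_int (x * y) \<longrightarrow> alg_int (of_int D * y))"
proof -
  define Q where "Q = (\<Prod>\<sigma>\<in>G - {id}. \<sigma> x)"
  have "alg_int (galois_norm x)" unfolding galois_norm_def using x aut_alg_int by (intro alg_int_prod) blast
  with galois_norm_Rats[OF x(1)] have "galois_norm x \<in> \<int>" by (intro alg_int_Rats_imp_Ints)
  then obtain D where D: "galois_norm x = of_int D" by (auto elim: Ints_cases)
  have D0: "D \<noteq> 0" using D galois_norm_nonzero[OF x(1,3)] by auto
  have aQ: "alg_int Q" unfolding Q_def using x aut_alg_int by (intro alg_int_prod) blast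
  have "alg_int (of_int D * y)" if "alg_int (x * y)" for y
  proof -
    have e: "of_int D * y = Q * (x * y)"
      using D galois_norm_eq_mult[of x] unfolding Q_def by (metis mult.assoc mult.commute)
    show ?thesis unfolding e by (rule alg_int_mult[OF aQ that])
  qed
  then show ?thesis using D0 by blast
qed

text \<open>Cramer's rule for the Vandermonde system \<open>(\<sigma> \<xi>\<^sup>i)\<close>: the power-basis coordinates
  of an algebraic integer become algebraic integers after multiplication by its determinant.\<close>

lemma vandermonde_coord_alg_int:
  assumes gl: "distinct gl" "set gl = G" and x: "x \<in> R"
    and q: "x = (\<Sum>i<d. of_rat (q i) * \<xi> ^ i)" and k: "k < d"
  shows "alg_int (det (mat d d (\<lambda>(s,i). (gl ! s) \<xi> ^ i)) * of_rat (q k))"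
proof -
  have lgl: "length gl = d" using gl galois distinct_card by metis
  have glG: "s < d \<Longrightarrow> gl ! s \<in> G" for s using gl lgl by auto
  define V where "V = mat d d (\<lambda>(s,i). (gl ! s) \<xi> ^ i)"
  have V: "V \<in> carrier_mat d d" by (simp add: V_def)
  have xL: "x \<in> L" and xa: "alg_int x" using x by (auto simp: R_iff)
  define qv where "qv = vec d (\<lambda>i. of_rat (q i) :: complex)"
  have qv: "qv \<in> carrier_vec d" by (simp add: qv_def)
  have Vq: "V *\<^sub>v qv = vec d (\<lambda>s. (gl ! s) x)"
  proof (rule eq_vecI)
    fix s assume "s < dim_vec (vec d (\<lambda>s. (gl ! s) x))"
    then have s: "s < d" by simp
    have "(gl ! s) x = (\<Sum>i<d. (gl ! s) (of_rat (q i) * \<xi> ^ i))"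
      unfolding q by (rule aut_sum[OF glG[OF s]]) auto
    also have "\<dots> = (\<Sum>i<d. of_rat (q i) * (gl ! s) \<xi> ^ i)"
      by (intro sum.cong refl)
         (simp add: aut_mult[OF glG[OF s]] aut_of_rat[OF glG[OF s]] aut_power[OF glG[OF s]] QQ_adj_power)
    finally show "(V *\<^sub>v qv) $ s = vec d (\<lambda>s. (gl ! s) x) $ s"
      using s by (simp add: V_def qv_def mult_mat_vec_def scalar_prod_def lessThan_atLeast0 mult.commute)
  qed (simp add: V_def)
  have "det (replace_col V (V *\<^sub>v qv) k) = qv $ k * det V" by (rule cramer_lemma_mat[OF V qv k])
  moreover have "alg_int (det (replace_col V (V *\<^sub>v qv) k))"
  proof (rule det_alg_int)
    show "replace_col V (V *\<^sub>v qv) k \<in> carrier_mat d d" using V by (simp add: replace_col_def)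
    fix i j assume ij: "i < d" "j < d"
    have "alg_int ((gl ! i) x)" using aut_alg_int[OF glG[OF ij(1)]] xL xa by blast
    then show "alg_int (replace_col V (V *\<^sub>v qv) k $$ (i, j))"
      unfolding Vq using ij V glG xL xa
      by (auto simp: replace_col_def V_def alg_int_conj alg_int_power aut_alg_int)
  qed
  ultimately show ?thesis using k by (simp add: V_def[symmetric] qv_def mult.commute)
qed

lemma ints_denominator:
  "\<exists>D::int. D \<noteq> 0 \<and> (\<forall>x\<in>R. \<exists>z::nat \<Rightarrow> int. of_int D * x = (\<Sum>i<d. of_int (z i) * \<xi> ^ i))"
proof -
  obtain gl where gl: "distinct gl" "set gl = G" using finite_distinct_list[OF finite_G] by blast
  have lgl: "length gl = d" using gl galois distinct_card by metis
  have glG: "s < d \<Longrightarrow> gl ! s \<in> G" for s using gl lgl by auto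
  define V where "V = mat d d (\<lambda>(s,i). (gl ! s) \<xi> ^ i)"
  have V: "V \<in> carrier_mat d d" by (simp add: V_def)
  have injr: "inj_on (\<lambda>s. (gl ! s) \<xi>) {..<d}"
  proof (rule inj_onI)
    fix s t assume st: "s \<in> {..<d}" "t \<in> {..<d}" "(gl ! s) \<xi> = (gl ! t) \<xi>"
    then have "gl ! s = gl ! t" using aut_eq_if_xi_eq glG by auto
    then show "s = t" using gl(1) lgl st by (simp add: nth_eq_iff_index_eq)
  qed
  have dV: "det V \<noteq> 0" unfolding V_def by (rule det_vandermonde_nonzero[OF injr])
  have VL: "det V \<in> L" using V glG by (intro det_in_L[OF V]) (auto simp: V_def conj_in_L)
  have Va: "alg_int (det V)" using V glG by (intro det_alg_int[OF V]) (auto simp: V_def alg_int_conj alg_int_power)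
  obtain D where D0: "D \<noteq> 0" and D: "\<forall>y. alg_int (det V * y) \<longrightarrow> alg_int (of_int D * y)"
    using alg_int_clear_denominator[OF VL Va dV] by blast
  have "\<exists>z::nat \<Rightarrow> int. of_int D * x = (\<Sum>i<d. of_int (z i) * \<xi> ^ i)" if x: "x \<in> R" for x
  proof -
    obtain q where q: "x = (\<Sum>i<d. of_rat (q i) * \<xi> ^ i)" using power_basis_repr x by (auto simp: R_iff)
    have "\<exists>zk. of_int D * of_rat (q k) = (of_int zk :: complex)" if k: "k < d" for k
    proof -
      have "alg_int (of_int D * of_rat (q k))"
        using D vandermonde_coord_alg_int[OF gl x q k] unfolding V_def by blast
      moreover have "(of_int D * of_rat (q k) :: complex) \<in> \<rat>" by simp
      ultimately have "(of_int D * of_rat (q k) :: complex) \<in> \<int>" by (rule alg_int_Rats_imp_Ints)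
      then show ?thesis by (auto elim: Ints_cases)
    qed
    then obtain z where z: "\<forall>k<d. of_int D * of_rat (q k) = (of_int (z k) :: complex)" by metis
    have "of_int D * x = (\<Sum>i<d. (of_int D * of_rat (q i)) * \<xi> ^ i)"
      unfolding q by (simp add: sum_distrib_left mult.assoc)
    also have "\<dots> = (\<Sum>i<d. of_int (z i) * \<xi> ^ i)" using z by (intro sum.cong refl) auto
    finally show ?thesis by blast
  qed
  then show ?thesis using D0 by blast
qed

end

lemma p_integral_if_mult_Ints:
  assumes p: "prime p" and M: "\<not> int p dvd M" "M \<noteq> 0" and r: "r * of_int M \<in> \<int>"
  shows "p_integral p r"
proof -
  obtain k where k: "r * of_int M = of_int k" using r by (auto elim: Ints_cases)
  obtain a b where ab: "quotient_of r = (a, b)" by (cases "quotient_of r")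
  have b0: "b > 0" and cop: "coprime a b" and rab: "r = of_int a / of_int b"
    using quotient_of_denom_pos[OF ab] quotient_of_coprime[OF ab] quotient_of_div[OF ab] by auto
  have "of_int a * of_int M = (of_int k * of_int b :: rat)" using k rab b0 by (simp add: field_simps)
  then have "a * M = k * b" by (metis of_int_eq_iff of_int_mult)
  then have "b dvd a * M" by (metis dvd_triv_right)
  then have "b dvd M" using cop by (metis coprime_commute coprime_dvd_mult_right_iff)
  then show ?thesis unfolding p_integral_def using ab M(1) by (auto intro: dvd_trans)
qed

lemma rat_cong_p_if_scaled:
  assumes p: "prime p" and M: "\<not> int p dvd M" "M \<noteq> 0" and c: "c \<in> \<int>"
    and e: "of_int M * (q - c) = of_nat p * of_int m"
  shows "p_integral p q \<and> rat_cong_p p q c"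
proof
  have "q * of_int M = of_int (m * int p) + c * of_int M" using e by (simp add: algebra_simps)
  moreover have "c * of_int M \<in> \<int>" using c by simp
  ultimately show "p_integral p q" by (intro p_integral_if_mult_Ints[OF p M]) simp
  show "rat_cong_p p q c"
    unfolding rat_cong_p_def
  proof (intro exI conjI)
    show "p_integral p (of_int m / of_int M)"
      by (rule p_integral_if_mult_Ints[OF p M]) (use M in simp)
    show "q - c = of_nat p * (of_int m / of_int M)" using e M by (simp add: field_simps)
  qed
qed

context normal_basis_field
begin

lemma conj_class_closed:
  assumes K: "K \<in> conj_classes G" and s: "\<sigma> \<in> K" and r: "\<rho> \<in> G"
  shows "\<rho> \<circ> \<sigma> \<circ> ginv \<rho> \<in> K"
proof -
  obtain s1 where s1: "s1 \<in> G" and Kd: "K = {\<tau> \<circ> s1 \<circ> ginv \<tau> | \<tau>. \<tau> \<in> G}"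
    using K unfolding conj_classes_def by blast
  obtain t where t: "t \<in> G" "\<sigma> = t \<circ> s1 \<circ> ginv t" using s Kd by blast
  have "\<rho> \<circ> \<sigma> \<circ> ginv \<rho> = (\<rho> \<circ> t) \<circ> s1 \<circ> ginv (\<rho> \<circ> t)"
    using t r by (simp add: grp_inv_comp o_assoc)
  moreover have "\<rho> \<circ> t \<in> G" using r t comp_G by blast
  ultimately show ?thesis using Kd by blast
qed

lemma conj_class_conjugate:
  assumes K: "K \<in> conj_classes G" and s: "\<phi> \<in> K" and x: "x \<in> K"
  shows "\<exists>\<rho>\<in>G. x = \<rho> \<circ> \<phi> \<circ> ginv \<rho>"
proof -
  obtain s1 where s1: "s1 \<in> G" and Kd: "K = {\<tau> \<circ> s1 \<circ> ginv \<tau> | \<tau>. \<tau> \<in> G}"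
    using K unfolding conj_classes_def by blast
  obtain t where t: "t \<in> G" "\<phi> = t \<circ> s1 \<circ> ginv t" using s Kd by blast
  obtain u where u: "u \<in> G" "x = u \<circ> s1 \<circ> ginv u" using x Kd by blast
  have "(u \<circ> ginv t) \<circ> \<phi> \<circ> ginv (u \<circ> ginv t) = u \<circ> (ginv t \<circ> t) \<circ> s1 \<circ> (ginv t \<circ> t) \<circ> ginv u"
    using t u by (simp add: grp_inv_comp grp_inv_inv ginv_G o_assoc)
  also have "\<dots> = x" using t u by (simp add: grp_inv_left)
  finally show ?thesis using t u comp_G ginv_G by blast
qed

lemma prime_ideal_aut_image:
  assumes P: "prime_ideal_of R P" and r: "\<rho> \<in> G"
  shows "prime_ideal_of R (\<rho> ` P)"
proof -
  have I: "is_ideal R P" and one: "1 \<notin> P" and pr: "\<forall>x\<in>R. \<forall>y\<in>R. x * y \<in> P \<longrightarrow> x \<in> P \<or> y \<in> P"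
    using P unfolding prime_ideal_of_iff by auto
  have PR: "x \<in> P \<Longrightarrow> x \<in> R" for x using ideal_subset[OF I] .
  have RL: "x \<in> R \<Longrightarrow> x \<in> L" for x by (simp add: R_iff)
  let ?i = "ginv \<rho>"
  have ir: "?i \<in> G" using ginv_G[OF r] .
  have rir: "\<rho> (?i x) = x" for x using grp_inv_right_app[OF r] .
  have irr: "?i (\<rho> x) = x" for x using grp_inv_left_app[OF r] .
  show ?thesis unfolding prime_ideal_of_iff is_ideal_def
  proof (intro conjI ballI impI)
    show "\<rho> ` P \<subseteq> R" using PR R_aut[OF r] by blast
    show "0 \<in> \<rho> ` P" using ideal_0[OF I] aut_0[where \<sigma>=\<rho> and z=\<xi>] r by force
    fix x y assume "x \<in> \<rho> ` P" "y \<in> \<rho> ` P"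
    then obtain a b where "a \<in> P" "b \<in> P" "x = \<rho> a" "y = \<rho> b" by blast
    moreover have "\<rho> (a + b) = \<rho> a + \<rho> b" using calculation PR RL aut_add[OF r] by blast
    ultimately show "x + y \<in> \<rho> ` P" using ideal_add[OF I] by force
  next
    fix x y assume "x \<in> \<rho> ` P" "y \<in> R"
    then obtain a where a: "a \<in> P" "x = \<rho> a" by blast
    have iy: "?i y \<in> R" using R_aut[OF ir \<open>y \<in> R\<close>] .
    have "\<rho> (?i y * a) = \<rho> (?i y) * \<rho> a" using a iy PR RL aut_mult[OF r] by blast
    then have "y * x = \<rho> (?i y * a)" using a rir by simp
    moreover have "?i y * a \<in> P" using ideal_mult_left[OF I a(1) iy] .
    ultimately show "y * x \<in> \<rho> ` P" by blast
  next
    show "1 \<notin> \<rho> ` P"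
    proof
      assume "1 \<in> \<rho> ` P"
      then obtain a where "a \<in> P" "1 = \<rho> a" by blast
      then have "a = ?i 1" using irr by metis
      then have "a = 1" using aut_1[OF ir] by simp
      with \<open>a \<in> P\<close> one show False by simp
    qed
  next
    fix x y assume xy: "x \<in> R" "y \<in> R" "x * y \<in> \<rho> ` P"
    then obtain a where a: "a \<in> P" "x * y = \<rho> a" by blast
    have "?i (x * y) = ?i x * ?i y" using xy RL aut_mult[OF ir] by blast
    then have "?i x * ?i y \<in> P" using a irr by metis
    moreover have "?i x \<in> R" "?i y \<in> R" using R_aut[OF ir] xy by auto
    ultimately have "?i x \<in> P \<or> ?i y \<in> P" using pr by blast
    then show "x \<in> \<rho> ` P \<or> y \<in> \<rho> ` P" using rir by (metis image_eqI)
  qed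
qed

lemma frob_set_conj:
  assumes \<phi>: "\<phi> \<in> frob_set L G p" and r: "\<rho> \<in> G"
  shows "\<rho> \<circ> \<phi> \<circ> ginv \<rho> \<in> frob_set L G p"
proof -
  obtain P where f: "\<phi> \<in> G" "prime_ideal_of R P" "of_nat p \<in> P" "\<forall>x\<in>R. \<phi> x - x ^ p \<in> P"
    using \<phi> unfolding frob_set_def by blast
  let ?i = "ginv \<rho>"
  have ir: "?i \<in> G" using ginv_G[OF r] .
  have "of_nat p \<in> \<rho> ` P" using f(3) aut_of_nat[where \<sigma>=\<rho> and z=\<xi>] r by (metis image_eqI)
  moreover have "(\<rho> \<circ> \<phi> \<circ> ?i) x - x ^ p \<in> \<rho> ` P" if x: "x \<in> R" for x
  proof -
    define u where "u = ?i x"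
    have u: "u \<in> R" unfolding u_def using R_aut[OF ir x] .
    have fu: "\<phi> u \<in> R" using R_aut[OF f(1) u] .
    have "(\<rho> \<circ> \<phi> \<circ> ?i) x - x ^ p = \<rho> (\<phi> u) - \<rho> u ^ p" by (simp add: u_def grp_inv_right_app[OF r])
    also have "\<dots> = \<rho> (\<phi> u - u ^ p)"
      using aut_diff[where \<sigma>=\<rho> and z=\<xi>] aut_power[where \<sigma>=\<rho> and z=\<xi>] r u fu R_power
      by (auto simp: R_iff)
    also have "\<dots> \<in> \<rho> ` P" using f(4) u by blast
    finally show ?thesis .
  qed
  moreover have "\<rho> \<circ> \<phi> \<circ> ?i \<in> G" using r f(1) ir comp_G by blast
  ultimately show ?thesis using prime_ideal_aut_image[OF f(2) r] unfolding frob_set_def by blast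
qed

end

section \<open>The matrices \<open>P\<close>, \<open>\<Gamma>\<close> and \<open>\<kappa>\<close>\<close>

locale class_matrices = normal_basis_field +
  fixes gs :: "(complex \<Rightarrow> complex) list" and Ks :: "(complex \<Rightarrow> complex) set list"
  assumes gs: "distinct gs" "set gs = G"
    and Ks: "distinct Ks" "set Ks = conj_classes G"
begin

abbreviation Gamma :: "complex mat" where "Gamma \<equiv> mat d d (\<lambda>(s, t). (gs ! s \<circ> ginv (gs ! t)) \<xi>)"
abbreviation Pmat :: "complex mat" where "Pmat \<equiv> mat d d (\<lambda>(i, s). ginv (gs ! s) (\<xi> ^ i))"
abbreviation kappa :: "complex mat" where "kappa \<equiv> mat d (length Ks) (\<lambda>(t, j). if gs ! t \<in> Ks ! j then 1 else 0)"

lemma length_gs: "length gs = d" using gs galois distinct_card by metis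
lemma nth_gs_in_G: "s < d \<Longrightarrow> gs ! s \<in> G" using gs length_gs by auto

lemma sum_over_gs: "(\<Sum>s<d. f (gs ! s)) = (\<Sum>\<sigma>\<in>G. f \<sigma>)"
proof -
  have inj: "inj_on (nth gs) {..<d}" using gs(1) length_gs by (simp add: inj_on_nth)
  have im: "nth gs ` {..<d} = G" using gs(2) length_gs by (auto simp: set_conv_nth)
  show ?thesis using sum.reindex[OF inj, of f] im by simp
qed

definition gs_index :: "(complex \<Rightarrow> complex) \<Rightarrow> nat" where "gs_index \<sigma> = inv_into {..<d} (nth gs) \<sigma>"

lemma gs_index: assumes "\<sigma> \<in> G" shows "gs_index \<sigma> < d" "gs ! gs_index \<sigma> = \<sigma>"
proof -
  have im: "nth gs ` {..<d} = G" using gs(2) length_gs by (auto simp: set_conv_nth)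
  show "gs_index \<sigma> < d" unfolding gs_index_def using assms im by (metis inv_into_into lessThan_iff)
  show "gs ! gs_index \<sigma> = \<sigma>" unfolding gs_index_def using assms im by (simp add: f_inv_into_f)
qed

lemma gs_index_nth: "s < d \<Longrightarrow> gs_index (gs ! s) = s"
  unfolding gs_index_def using gs(1) length_gs by (simp add: inv_into_f_f inj_on_nth)

lemma Gamma_carrier: "Gamma \<in> carrier_mat d d" by simp

lemma Gamma_entry_aut: "s < d \<Longrightarrow> t < d \<Longrightarrow> (gs ! s \<circ> ginv (gs ! t)) \<in> G"
  using nth_gs_in_G comp_G ginv_G by blast

text \<open>A kernel vector \<open>w\<close> of \<open>\<Gamma>\<^sup>T\<close> satisfies \<open>\<Sum>\<^sub>s w\<^sub>s \<sigma>\<^sub>s(y) = 0\<close> for all \<open>y\<close> in the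
  span of the normal basis, i.e. for all \<open>y \<in> L\<close>; taking \<open>y = \<xi>\<^sup>i\<close> gives a Vandermonde system.\<close>

lemma det_Gamma_nonzero: "det Gamma \<noteq> 0"
proof
  assume "det Gamma = 0"
  then have "det (transpose_mat Gamma) = 0" using det_transpose[OF Gamma_carrier] by simp
  then obtain w where w: "w \<in> carrier_vec d" "w \<noteq> 0\<^sub>v d" "transpose_mat Gamma *\<^sub>v w = 0\<^sub>v d"
    using det_0_iff_vec_prod_zero_field[of "transpose_mat Gamma" d] by auto
  have wt: "(\<Sum>s<d. w $ s * (gs ! s) (ginv (gs ! t) \<xi>)) = 0" if t: "t < d" for t
  proof -
    have "(transpose_mat Gamma *\<^sub>v w) $ t = 0" using w(3) t by simp
    then show ?thesis using t w(1)
      by (simp add: mult_mat_vec_def scalar_prod_def lessThan_atLeast0 mult.commute)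
  qed
  have wy: "(\<Sum>s<d. w $ s * (gs ! s) y) = 0" if y: "y \<in> L" for y
  proof -
    obtain c where c: "y = (\<Sum>\<sigma>\<in>G. of_rat (c \<sigma>) * \<sigma> \<xi>)" using normal_span y by blast
    have "y = (\<Sum>\<sigma>\<in>G. of_rat (c (ginv \<sigma>)) * ginv \<sigma> \<xi>)" unfolding c by (rule sum_ginv[symmetric])
    also have "\<dots> = (\<Sum>t<d. of_rat (c (ginv (gs ! t))) * ginv (gs ! t) \<xi>)" by (rule sum_over_gs[symmetric])
    finally have y2: "y = (\<Sum>t<d. of_rat (c (ginv (gs ! t))) * ginv (gs ! t) \<xi>)" .
    have gy: "(gs ! s) y = (\<Sum>t<d. of_rat (c (ginv (gs ! t))) * (gs ! s) (ginv (gs ! t) \<xi>))" if s: "s < d" for s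
    proof -
      have "(gs ! s) y = (\<Sum>t<d. (gs ! s) (of_rat (c (ginv (gs ! t))) * ginv (gs ! t) \<xi>))"
        unfolding y2 by (rule aut_sum[OF nth_gs_in_G[OF s]]) (auto simp: conj_in_L ginv_G nth_gs_in_G intro!: QQ_adj_mult)
      also have "\<dots> = (\<Sum>t<d. of_rat (c (ginv (gs ! t))) * (gs ! s) (ginv (gs ! t) \<xi>))"
        by (intro sum.cong refl) (auto simp: aut_mult[OF nth_gs_in_G[OF s]] aut_of_rat[OF nth_gs_in_G[OF s]] conj_in_L ginv_G nth_gs_in_G)
      finally show ?thesis .
    qed
    have "(\<Sum>s<d. w $ s * (gs ! s) y) = (\<Sum>s<d. \<Sum>t<d. of_rat (c (ginv (gs ! t))) * (w $ s * (gs ! s) (ginv (gs ! t) \<xi>)))"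
      by (intro sum.cong refl) (simp add: gy sum_distrib_left mult.left_commute)
    also have "\<dots> = (\<Sum>t<d. \<Sum>s<d. of_rat (c (ginv (gs ! t))) * (w $ s * (gs ! s) (ginv (gs ! t) \<xi>)))"
      by (rule sum.swap)
    also have "\<dots> = (\<Sum>t<d. of_rat (c (ginv (gs ! t))) * (\<Sum>s<d. w $ s * (gs ! s) (ginv (gs ! t) \<xi>)))"
      by (simp add: sum_distrib_left)
    also have "\<dots> = 0" using wt by simp
    finally show ?thesis .
  qed
  have "\<forall>i<d. (\<Sum>s<d. w $ s * (gs ! s) \<xi> ^ i) = 0"
  proof (intro allI impI)
    fix i assume "i < d"
    have "(\<Sum>s<d. w $ s * (gs ! s) (\<xi> ^ i)) = 0" by (rule wy) auto
    then show "(\<Sum>s<d. w $ s * (gs ! s) \<xi> ^ i) = 0"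
      by (simp add: aut_power[OF nth_gs_in_G])
  qed
  moreover have injr: "inj_on (\<lambda>s. (gs ! s) \<xi>) {..<d}"
  proof (rule inj_onI)
    fix s t assume st: "s \<in> {..<d}" "t \<in> {..<d}" "(gs ! s) \<xi> = (gs ! t) \<xi>"
    then have "gs ! s = gs ! t" using aut_eq_if_xi_eq nth_gs_in_G by auto
    then show "s = t" using gs(1) length_gs st by (simp add: nth_eq_iff_index_eq)
  qed
  ultimately have "\<forall>s<d. w $ s = 0" using vandermonde_kernel_zero[OF injr] by blast
  then have "w = 0\<^sub>v d" using w(1) by (intro eq_vecI) auto
  with w(2) show False by simp
qed

definition Gamma_inv :: "complex mat" where "Gamma_inv = the (mat_inverse Gamma)"

lemma Gamma_inv: "Gamma * Gamma_inv = 1\<^sub>m d" "Gamma_inv * Gamma = 1\<^sub>m d" "Gamma_inv \<in> carrier_mat d d"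
proof -
  have "Gamma \<in> Units (ring_mat TYPE(complex) d ())"
    by (rule det_non_zero_imp_unit[OF Gamma_carrier det_Gamma_nonzero])
  then obtain B where "mat_inverse Gamma = Some B"
    using mat_inverse(1)[OF Gamma_carrier, of "()"] by (cases "mat_inverse Gamma") auto
  then show "Gamma * Gamma_inv = 1\<^sub>m d" "Gamma_inv * Gamma = 1\<^sub>m d" "Gamma_inv \<in> carrier_mat d d"
    using mat_inverse(2)[OF Gamma_carrier] unfolding Gamma_inv_def by auto
qed

lemma invertible_Gamma: "invertible_mat Gamma"
  unfolding invertible_mat_def inverts_mat_def using Gamma_inv by (intro conjI exI[of _ Gamma_inv]) (auto simp: square_mat.simps)

end

lemma index_mult_mat_sum:
  fixes A C :: "'a::comm_ring_1 mat"
  assumes "A \<in> carrier_mat n m" "C \<in> carrier_mat m k" "i < n" "j < k"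
  shows "(A * C) $$ (i, j) = (\<Sum>t<m. A $$ (i, t) * C $$ (t, j))"
  using assms by (simp add: scalar_prod_def lessThan_atLeast0)

lemma index_mult_mat_vec_sum:
  fixes A :: "'a::comm_ring_1 mat"
  assumes "A \<in> carrier_mat n m" "v \<in> carrier_vec m" "i < n"
  shows "(A *\<^sub>v v) $ i = (\<Sum>t<m. A $$ (i, t) * v $ t)"
  using assms by (simp add: scalar_prod_def lessThan_atLeast0)

context class_matrices
begin

definition bcol :: "nat \<Rightarrow> nat \<Rightarrow> complex" where
  "bcol j s = (Gamma_inv * kappa) $$ (s, j)"

definition bcoef :: "nat \<Rightarrow> (complex \<Rightarrow> complex) \<Rightarrow> complex" where
  "bcoef j \<sigma> = bcol j (gs_index \<sigma>)"

definition class_ind :: "nat \<Rightarrow> (complex \<Rightarrow> complex) \<Rightarrow> complex" where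
  "class_ind j \<sigma> = (if \<sigma> \<in> Ks ! j then 1 else 0)"

lemma conj_conj_in_L: "\<sigma> \<in> G \<Longrightarrow> \<tau> \<in> G \<Longrightarrow> \<sigma> (\<tau> \<xi>) \<in> L"
  using conj_in_L[OF comp_G] by simp

lemma Gamma_Gamma_inv_kappa: "Gamma * (Gamma_inv * kappa) = kappa"
proof -
  have "Gamma * (Gamma_inv * kappa) = (Gamma * Gamma_inv) * kappa" using Gamma_inv(3) by (simp add: assoc_mult_mat[symmetric, of _ d d _ d _ "length Ks"])
  also have "\<dots> = kappa" using Gamma_inv(1) by simp
  finally show ?thesis .
qed

lemma Gamma_inv_kappa_carrier: "Gamma_inv * kappa \<in> carrier_mat d (length Ks)" using Gamma_inv(3) by simp

lemma Gamma_bcoef: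
  assumes j: "j < length Ks" and s: "\<sigma> \<in> G"
  shows "(\<Sum>\<tau>\<in>G. (\<sigma> \<circ> ginv \<tau>) \<xi> * bcoef j \<tau>) = class_ind j \<sigma>"
proof -
  have ixs: "gs_index \<sigma> < d" "gs ! gs_index \<sigma> = \<sigma>" using gs_index[OF s] by auto
  have "kappa $$ (gs_index \<sigma>, j) = (Gamma * (Gamma_inv * kappa)) $$ (gs_index \<sigma>, j)" using Gamma_Gamma_inv_kappa by simp
  also have "\<dots> = (\<Sum>t<d. Gamma $$ (gs_index \<sigma>, t) * bcol j t)"
    unfolding bcol_def by (rule index_mult_mat_sum[OF Gamma_carrier Gamma_inv_kappa_carrier ixs(1) j])
  also have "\<dots> = (\<Sum>t<d. (\<sigma> \<circ> ginv (gs ! t)) \<xi> * bcoef j (gs ! t))"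
    using ixs by (intro sum.cong refl) (simp add: bcoef_def gs_index_nth)
  also have "\<dots> = (\<Sum>\<tau>\<in>G. (\<sigma> \<circ> ginv \<tau>) \<xi> * bcoef j \<tau>)" by (rule sum_over_gs)
  finally show ?thesis using ixs j by (simp add: class_ind_def)
qed

lemma A_entry:
  assumes i: "i < d" and j: "j < length Ks"
  shows "(Pmat * the (mat_inverse Gamma) * kappa) $$ (i, j) = (\<Sum>\<sigma>\<in>G. ginv \<sigma> (\<xi> ^ i) * bcoef j \<sigma>)"
proof -
  have "Pmat * the (mat_inverse Gamma) * kappa = Pmat * (Gamma_inv * kappa)"
    using Gamma_inv(3) unfolding Gamma_inv_def[symmetric] by (simp add: assoc_mult_mat[of _ d d _ d _ "length Ks"])
  then have "(Pmat * the (mat_inverse Gamma) * kappa) $$ (i, j) = (\<Sum>s<d. Pmat $$ (i, s) * bcol j s)"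
    unfolding bcol_def using index_mult_mat_sum[OF _ Gamma_inv_kappa_carrier i j, of Pmat] by simp
  also have "\<dots> = (\<Sum>s<d. ginv (gs ! s) (\<xi> ^ i) * bcoef j (gs ! s))"
    using i by (intro sum.cong refl) (simp add: bcoef_def gs_index_nth)
  also have "\<dots> = (\<Sum>\<sigma>\<in>G. ginv \<sigma> (\<xi> ^ i) * bcoef j \<sigma>)" by (rule sum_over_gs)
  finally show ?thesis .
qed

lemma Gamma_b_col:
  assumes j: "j < length Ks"
  shows "Gamma *\<^sub>v col (Gamma_inv * kappa) j = vec d (\<lambda>s. class_ind j (gs ! s))"
proof -
  have "Gamma *\<^sub>v col (Gamma_inv * kappa) j = col (Gamma * (Gamma_inv * kappa)) j"
    using Gamma_inv_kappa_carrier j by (simp add: col_mult2[of _ d d _ "length Ks"])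
  also have "\<dots> = col kappa j" using Gamma_Gamma_inv_kappa by simp
  also have "\<dots> = vec d (\<lambda>s. class_ind j (gs ! s))" using j by (auto simp: class_ind_def)
  finally show ?thesis .
qed

lemma Gamma_solution_unique:
  assumes j: "j < length Ks" and X: "\<forall>\<sigma>\<in>G. (\<Sum>\<tau>\<in>G. (\<sigma> \<circ> ginv \<tau>) \<xi> * X \<tau>) = class_ind j \<sigma>"
    and t: "\<tau> \<in> G"
  shows "X \<tau> = bcoef j \<tau>"
proof -
  define xv where "xv = vec d (\<lambda>t. X (gs ! t))"
  define bv where "bv = col (Gamma_inv * kappa) j"
  have xv: "xv \<in> carrier_vec d" by (simp add: xv_def)
  have bv: "bv \<in> carrier_vec d" using col_dim[of "Gamma_inv * kappa" j] Gamma_inv(3) by (simp add: bv_def)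
  have "Gamma *\<^sub>v xv = vec d (\<lambda>s. class_ind j (gs ! s))"
  proof (rule eq_vecI)
    fix s assume "s < dim_vec (vec d (\<lambda>s. class_ind j (gs ! s)))"
    then have s: "s < d" by simp
    have "(Gamma *\<^sub>v xv) $ s = (\<Sum>t<d. Gamma $$ (s, t) * xv $ t)"
      by (rule index_mult_mat_vec_sum[OF Gamma_carrier xv s])
    also have "\<dots> = (\<Sum>t<d. (gs ! s \<circ> ginv (gs ! t)) \<xi> * X (gs ! t))"
      using s by (intro sum.cong refl) (simp add: xv_def)
    also have "\<dots> = (\<Sum>\<tau>\<in>G. (gs ! s \<circ> ginv \<tau>) \<xi> * X \<tau>)" by (rule sum_over_gs)
    also have "\<dots> = class_ind j (gs ! s)" using X nth_gs_in_G[OF s] by blast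
    finally show "(Gamma *\<^sub>v xv) $ s = vec d (\<lambda>s. class_ind j (gs ! s)) $ s" using s by simp
  qed simp
  then have e: "Gamma *\<^sub>v xv = Gamma *\<^sub>v bv" using Gamma_b_col[OF j] by (simp add: bv_def)
  have "xv = (Gamma_inv * Gamma) *\<^sub>v xv" using Gamma_inv(2) xv by simp
  also have "\<dots> = Gamma_inv *\<^sub>v (Gamma *\<^sub>v xv)" using Gamma_inv(3) xv by (simp add: assoc_mult_mat_vec[of _ d d _ d])
  also have "\<dots> = Gamma_inv *\<^sub>v (Gamma *\<^sub>v bv)" using e by simp
  also have "\<dots> = (Gamma_inv * Gamma) *\<^sub>v bv" using Gamma_inv(3) bv by (simp add: assoc_mult_mat_vec[of _ d d _ d])
  also have "\<dots> = bv" using Gamma_inv(2) bv by simp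
  finally have "xv = bv" .
  then have "xv $ gs_index \<tau> = bv $ gs_index \<tau>" by simp
  then show ?thesis using gs_index[OF t] Gamma_inv(3) j by (simp add: xv_def bv_def bcoef_def bcol_def)
qed

lemma bcoef_cramer:
  assumes j: "j < length Ks" and t: "\<tau> \<in> G"
  shows "bcoef j \<tau> * det Gamma = det (replace_col Gamma (vec d (\<lambda>s. class_ind j (gs ! s))) (gs_index \<tau>))"
proof -
  define bv where "bv = col (Gamma_inv * kappa) j"
  have bv: "bv \<in> carrier_vec d" using col_dim[of "Gamma_inv * kappa" j] Gamma_inv(3) by (simp add: bv_def)
  have "det (replace_col Gamma (Gamma *\<^sub>v bv) (gs_index \<tau>)) = bv $ (gs_index \<tau>) * det Gamma"
    by (rule cramer_lemma_mat[OF Gamma_carrier bv gs_index(1)[OF t]])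
  then show ?thesis using Gamma_b_col[OF j] gs_index[OF t] Gamma_inv(3) j
    by (simp add: bv_def bcoef_def bcol_def)
qed

lemma class_ind_in_L: "class_ind j \<sigma> \<in> L" by (simp add: class_ind_def)
lemma class_ind_alg_int: "alg_int (class_ind j \<sigma>)" by (simp add: class_ind_def)

lemma replace_col_entries:
  assumes "s < d" "t < d"
  shows "replace_col Gamma (vec d (\<lambda>s. class_ind j (gs ! s))) k $$ (s, t) \<in> L \<and>
         alg_int (replace_col Gamma (vec d (\<lambda>s. class_ind j (gs ! s))) k $$ (s, t))"
proof -
  have g: "gs ! s \<circ> ginv (gs ! t) \<in> G" using Gamma_entry_aut assms by blast
  show ?thesis using assms conj_in_L[OF g] alg_int_conj[OF g] class_ind_in_L class_ind_alg_int
    by (simp add: replace_col_def)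
qed

lemma Gamma_entry_in_L: "s < d \<Longrightarrow> t < d \<Longrightarrow> (gs ! s) (ginv (gs ! t) \<xi>) \<in> L"
  using conj_in_L[OF Gamma_entry_aut] by simp
lemma Gamma_entry_alg_int: "s < d \<Longrightarrow> t < d \<Longrightarrow> alg_int ((gs ! s) (ginv (gs ! t) \<xi>))"
  using alg_int_conj[OF Gamma_entry_aut] by simp

lemma det_Gamma_in_L: "det Gamma \<in> L"
  by (rule det_in_L[OF Gamma_carrier]) (simp add: Gamma_entry_in_L)
lemma det_Gamma_alg_int: "alg_int (det Gamma)"
  by (rule det_alg_int[OF Gamma_carrier]) (simp add: Gamma_entry_alg_int)

lemma bcoef_in_L: assumes j: "j < length Ks" and t: "\<tau> \<in> G" shows "bcoef j \<tau> \<in> L"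
proof -
  have "bcoef j \<tau> = det (replace_col Gamma (vec d (\<lambda>s. class_ind j (gs ! s))) (gs_index \<tau>)) / det Gamma"
    using bcoef_cramer[OF j t] det_Gamma_nonzero by (simp add: field_simps)
  moreover have "det (replace_col Gamma (vec d (\<lambda>s. class_ind j (gs ! s))) (gs_index \<tau>)) \<in> L"
    by (rule det_in_L[of _ d]) (use replace_col_entries in \<open>auto simp: replace_col_def\<close>)
  ultimately show ?thesis using det_Gamma_in_L by (simp add: QQ_adj_divide)
qed

lemma bcoef_clear_denominator: assumes j: "j < length Ks"
  shows "\<exists>M::int. M \<noteq> 0 \<and> (\<forall>\<tau>\<in>G. alg_int (of_int M * bcoef j \<tau>))"
proof -
  obtain M where M0: "M \<noteq> 0" and M: "\<forall>y. alg_int (det Gamma * y) \<longrightarrow> alg_int (of_int M * y)"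
    using alg_int_clear_denominator[OF det_Gamma_in_L det_Gamma_alg_int det_Gamma_nonzero] by blast
  have "alg_int (of_int M * bcoef j \<tau>)" if t: "\<tau> \<in> G" for \<tau>
  proof -
    have "alg_int (det (replace_col Gamma (vec d (\<lambda>s. class_ind j (gs ! s))) (gs_index \<tau>)))"
      by (rule det_alg_int[of _ d]) (use replace_col_entries in \<open>auto simp: replace_col_def\<close>)
    then have "alg_int (det Gamma * bcoef j \<tau>)" using bcoef_cramer[OF j t] by (simp add: mult.commute)
    then show ?thesis using M by blast
  qed
  then show ?thesis using M0 by blast
qed

lemma class_ind_conj:
  assumes j: "j < length Ks" and s: "\<sigma> \<in> G" and r: "\<rho> \<in> G"
  shows "class_ind j (ginv \<rho> \<circ> \<sigma> \<circ> \<rho>) = class_ind j \<sigma>"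
proof -
  have K: "Ks ! j \<in> conj_classes G" using Ks(2) j nth_mem by blast
  have "ginv \<rho> \<circ> \<sigma> \<circ> \<rho> \<in> Ks ! j \<longleftrightarrow> \<sigma> \<in> Ks ! j"
  proof
    assume "ginv \<rho> \<circ> \<sigma> \<circ> \<rho> \<in> Ks ! j"
    from conj_class_closed[OF K this r] have "\<rho> \<circ> (ginv \<rho> \<circ> \<sigma> \<circ> \<rho>) \<circ> ginv \<rho> \<in> Ks ! j" .
    moreover have "\<rho> \<circ> (ginv \<rho> \<circ> \<sigma> \<circ> \<rho>) \<circ> ginv \<rho> = \<sigma>"
      using ginv_cancel[OF r] by (simp add: o_assoc)
    ultimately show "\<sigma> \<in> Ks ! j" by simp
  next
    assume "\<sigma> \<in> Ks ! j"
    from conj_class_closed[OF K this ginv_G[OF r]] show "ginv \<rho> \<circ> \<sigma> \<circ> \<rho> \<in> Ks ! j"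
      by (simp add: grp_inv_inv[OF r])
  qed
  then show ?thesis by (simp add: class_ind_def)
qed

lemma aut_bcoef_comp:
  assumes j: "j < length Ks" and r: "\<rho> \<in> G" and t: "\<tau> \<in> G"
  shows "\<rho> (bcoef j (\<tau> \<circ> \<rho>)) = bcoef j \<tau>"
proof -
  have "\<forall>\<sigma>\<in>G. (\<Sum>\<tau>\<in>G. (\<sigma> \<circ> ginv \<tau>) \<xi> * \<rho> (bcoef j (\<tau> \<circ> \<rho>))) = class_ind j \<sigma>"
  proof
    fix \<sigma> assume s: "\<sigma> \<in> G"
    define s0 where "s0 = ginv \<rho> \<circ> \<sigma> \<circ> \<rho>"
    have s0: "s0 \<in> G" unfolding s0_def using s r comp_G ginv_G by blast
    have e0: "(\<Sum>\<tau>\<in>G. (s0 \<circ> ginv \<tau>) \<xi> * bcoef j \<tau>) = class_ind j \<sigma>"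
      using Gamma_bcoef[OF j s0] class_ind_conj[OF j s r] by (simp add: s0_def)
    have "\<rho> (\<Sum>\<tau>\<in>G. (s0 \<circ> ginv \<tau>) \<xi> * bcoef j \<tau>) = (\<Sum>\<tau>\<in>G. \<rho> ((s0 \<circ> ginv \<tau>) \<xi> * bcoef j \<tau>))"
      by (rule aut_sum[OF r]) (use s0 bcoef_in_L[OF j] ginv_G conj_conj_in_L in \<open>auto intro!: QQ_adj_mult\<close>)
    also have "\<dots> = (\<Sum>\<tau>\<in>G. (\<sigma> (\<rho> (ginv \<tau> \<xi>))) * \<rho> (bcoef j \<tau>))"
    proof (intro sum.cong refl)
      fix \<tau> assume t: "\<tau> \<in> G"
      have "(s0 \<circ> ginv \<tau>) \<xi> \<in> L" using s0 t comp_G ginv_G conj_in_L by blast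
      then have "\<rho> ((s0 \<circ> ginv \<tau>) \<xi> * bcoef j \<tau>) = \<rho> ((s0 \<circ> ginv \<tau>) \<xi>) * \<rho> (bcoef j \<tau>)"
        using bcoef_in_L[OF j t] aut_mult[OF r] by blast
      moreover have "\<rho> ((s0 \<circ> ginv \<tau>) \<xi>) = \<sigma> (\<rho> (ginv \<tau> \<xi>))"
        by (simp add: s0_def grp_inv_right_app[OF r])
      ultimately show "\<rho> ((s0 \<circ> ginv \<tau>) \<xi> * bcoef j \<tau>) = \<sigma> (\<rho> (ginv \<tau> \<xi>)) * \<rho> (bcoef j \<tau>)" by simp
    qed
    also have "\<dots> = (\<Sum>\<tau>\<in>G. (\<sigma> (\<rho> (ginv (\<tau> \<circ> \<rho>) \<xi>))) * \<rho> (bcoef j (\<tau> \<circ> \<rho>)))"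
      by (rule sum_comp_right[OF r, symmetric])
    also have "\<dots> = (\<Sum>\<tau>\<in>G. (\<sigma> \<circ> ginv \<tau>) \<xi> * \<rho> (bcoef j (\<tau> \<circ> \<rho>)))"
    proof (intro sum.cong refl)
      fix \<tau> assume t: "\<tau> \<in> G"
      have "ginv (\<tau> \<circ> \<rho>) = ginv \<rho> \<circ> ginv \<tau>" using grp_inv_comp t r by blast
      then show "(\<sigma> (\<rho> (ginv (\<tau> \<circ> \<rho>) \<xi>))) * \<rho> (bcoef j (\<tau> \<circ> \<rho>)) = (\<sigma> \<circ> ginv \<tau>) \<xi> * \<rho> (bcoef j (\<tau> \<circ> \<rho>))"
        by (simp add: grp_inv_right_app[OF r])
    qed
    finally have "(\<Sum>\<tau>\<in>G. (\<sigma> \<circ> ginv \<tau>) \<xi> * \<rho> (bcoef j (\<tau> \<circ> \<rho>))) = \<rho> (class_ind j \<sigma>)" using e0 by simp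
    also have "\<rho> (class_ind j \<sigma>) = class_ind j \<sigma>"
      using aut_0[where \<sigma>=\<rho> and z=\<xi>] aut_1[OF r] r by (simp add: class_ind_def)
    finally show "(\<Sum>\<tau>\<in>G. (\<sigma> \<circ> ginv \<tau>) \<xi> * \<rho> (bcoef j (\<tau> \<circ> \<rho>))) = class_ind j \<sigma>" .
  qed
  then show ?thesis using Gamma_solution_unique[OF j _ t, where X="\<lambda>\<tau>. \<rho> (bcoef j (\<tau> \<circ> \<rho>))"] by simp
qed

lemma A_entry_Rats:
  assumes i: "i < d" and j: "j < length Ks"
  shows "(\<Sum>\<sigma>\<in>G. ginv \<sigma> (\<xi> ^ i) * bcoef j \<sigma>) \<in> \<rat>"
proof (rule fixed_imp_Rats)
  have gL: "\<sigma> \<in> G \<Longrightarrow> ginv \<sigma> (\<xi> ^ i) \<in> L" for \<sigma> using aut_in ginv_G QQ_adj_power QQ_adj_gen by blast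
  show "(\<Sum>\<sigma>\<in>G. ginv \<sigma> (\<xi> ^ i) * bcoef j \<sigma>) \<in> L" using gL bcoef_in_L[OF j] by (intro QQ_adj_sum QQ_adj_mult) auto
  show "\<forall>\<rho>\<in>G. \<rho> (\<Sum>\<sigma>\<in>G. ginv \<sigma> (\<xi> ^ i) * bcoef j \<sigma>) = (\<Sum>\<sigma>\<in>G. ginv \<sigma> (\<xi> ^ i) * bcoef j \<sigma>)"
  proof
    fix \<rho> assume r: "\<rho> \<in> G"
    have "\<rho> (\<Sum>\<sigma>\<in>G. ginv \<sigma> (\<xi> ^ i) * bcoef j \<sigma>) = (\<Sum>\<sigma>\<in>G. \<rho> (ginv \<sigma> (\<xi> ^ i)) * \<rho> (bcoef j \<sigma>))"
      using gL bcoef_in_L[OF j] by (subst aut_sum[OF r]) (auto intro!: QQ_adj_mult sum.cong simp: aut_mult[OF r])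
    also have "\<dots> = (\<Sum>\<tau>\<in>G. \<rho> (ginv (\<tau> \<circ> \<rho>) (\<xi> ^ i)) * \<rho> (bcoef j (\<tau> \<circ> \<rho>)))"
      by (rule sum_comp_right[OF r, symmetric])
    also have "\<dots> = (\<Sum>\<tau>\<in>G. ginv \<tau> (\<xi> ^ i) * bcoef j \<tau>)"
    proof (intro sum.cong refl)
      fix \<tau> assume t: "\<tau> \<in> G"
      have "ginv (\<tau> \<circ> \<rho>) = ginv \<rho> \<circ> ginv \<tau>" using grp_inv_comp t r by blast
      then show "\<rho> (ginv (\<tau> \<circ> \<rho>) (\<xi> ^ i)) * \<rho> (bcoef j (\<tau> \<circ> \<rho>)) = ginv \<tau> (\<xi> ^ i) * bcoef j \<tau>"
        using aut_bcoef_comp[OF j r t] by (simp add: grp_inv_right_app[OF r])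
    qed
    finally show "\<rho> (\<Sum>\<sigma>\<in>G. ginv \<sigma> (\<xi> ^ i) * bcoef j \<sigma>) = (\<Sum>\<sigma>\<in>G. ginv \<sigma> (\<xi> ^ i) * bcoef j \<sigma>)" .
  qed
qed

end

section \<open>The recurrent sequences\<close>

lemma linear_recurrence_unique:
  fixes a b :: "nat \<Rightarrow> 'a :: comm_ring"
  assumes init: "\<forall>i<d. a i = b i"
    and rec_a: "\<forall>n. a (n + d) = - (\<Sum>k<d. c k * a (n + k))"
    and rec_b: "\<forall>n. b (n + d) = - (\<Sum>k<d. c k * b (n + k))"
  shows "a n = b n"
proof (induction n rule: less_induct)
  case (less n)
  show ?case
  proof (cases "n < d")
    case True
    then show ?thesis using init by blast
  next
    case False
    then obtain m where m: "n = m + d" by (metis add.commute le_Suc_ex not_less)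
    have "a n = - (\<Sum>k<d. c k * a (m + k))" using rec_a m by simp
    also have "\<dots> = - (\<Sum>k<d. c k * b (m + k))"
      using less m by (intro arg_cong[where f = uminus] sum.cong refl) auto
    also have "\<dots> = b n" using rec_b m by simp
    finally show ?thesis .
  qed
qed

lemma linear_recurrence_Rats:
  fixes a :: "nat \<Rightarrow> 'a :: field_char_0"
  assumes init: "\<forall>i<d. a i \<in> \<rat>" and c: "\<forall>k. c k \<in> \<rat>"
    and rec: "\<forall>n. a (n + d) = - (\<Sum>k<d. c k * a (n + k))"
  shows "a n \<in> \<rat>"
proof (induction n rule: less_induct)
  case (less n)
  show ?case
  proof (cases "n < d")
    case True
    then show ?thesis using init by blast
  next
    case False
    then obtain m where m: "n = m + d" by (metis add.commute le_Suc_ex not_less)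
    have "(\<Sum>k<d. c k * a (m + k)) \<in> \<rat>"
      using less m c by (intro Rats_sum Rats_mult) auto
    then show ?thesis using rec m by simp
  qed
qed

context class_matrices
begin

lemma root_power_recurrence:
  assumes r: "poly (map_poly of_int F) r = (0::complex)"
  shows "r ^ (n + d) = - (\<Sum>k<d. of_int (coeff F k) * r ^ (n + k))"
proof -
  have "0 = (\<Sum>k\<le>d. of_int (coeff F k) * r ^ k)" using r by (simp add: poly_altdef degree_map_poly)
  also have "\<dots> = (\<Sum>k<d. of_int (coeff F k) * r ^ k) + r ^ d"
    using monic by (simp add: lessThan_Suc_atMost[symmetric])
  finally have "r ^ d = - (\<Sum>k<d. of_int (coeff F k) * r ^ k)" by (simp add: eq_neg_iff_add_eq_0 add.commute)
  then have "r ^ n * r ^ d = - (\<Sum>k<d. of_int (coeff F k) * (r ^ n * r ^ k))"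
    by (simp add: sum_distrib_left mult.left_commute)
  then show ?thesis by (simp add: power_add mult.commute)
qed

text \<open>The sequence of the theorem, written as a combination of powers of the conjugates of \<open>\<xi>\<close>.\<close>

definition class_seq :: "nat \<Rightarrow> nat \<Rightarrow> complex" where
  "class_seq j n = (\<Sum>\<sigma>\<in>G. ginv \<sigma> \<xi> ^ n * bcoef j \<sigma>)"

lemma class_seq_recurrence:
  "class_seq j (n + d) = - (\<Sum>k<d. of_int (coeff F k) * class_seq j (n + k))"
proof -
  have "class_seq j (n + d)
      = (\<Sum>\<sigma>\<in>G. (- (\<Sum>k<d. of_int (coeff F k) * ginv \<sigma> \<xi> ^ (n + k))) * bcoef j \<sigma>)"
    unfolding class_seq_def
    by (intro sum.cong refl) (simp add: root_power_recurrence[OF conj_root[OF ginv_G]])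
  also have "\<dots> = - (\<Sum>\<sigma>\<in>G. \<Sum>k<d. of_int (coeff F k) * (ginv \<sigma> \<xi> ^ (n + k) * bcoef j \<sigma>))"
    by (simp add: sum_distrib_right sum_negf mult.assoc)
  also have "\<dots> = - (\<Sum>k<d. \<Sum>\<sigma>\<in>G. of_int (coeff F k) * (ginv \<sigma> \<xi> ^ (n + k) * bcoef j \<sigma>))"
    by (subst sum.swap) simp
  also have "\<dots> = - (\<Sum>k<d. of_int (coeff F k) * class_seq j (n + k))"
    unfolding class_seq_def by (simp add: sum_distrib_left)
  finally show ?thesis .
qed

lemma class_seq_initial:
  assumes "i < d" "j < length Ks"
  shows "class_seq j i = (Pmat * the (mat_inverse Gamma) * kappa) $$ (i, j)"
  unfolding A_entry[OF assms] class_seq_def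
  by (intro sum.cong refl) (simp add: aut_power[OF grp_inv_in])

text \<open>The key congruence: modulo a prime \<open>P\<close> above \<open>p\<close> with Frobenius \<open>\<phi>\<close>,
  \<open>(\<sigma>\<^sup>-\<^sup>1 \<xi>)\<^sup>p \<equiv> \<phi> \<sigma>\<^sup>-\<^sup>1 \<xi>\<close>, and the defining system of \<open>bcoef\<close> evaluates
  \<open>\<Sum>\<^sub>\<sigma> \<phi> \<sigma>\<^sup>-\<^sup>1 \<xi> \<cdot> bcoef j \<sigma>\<close> to the class indicator of \<open>\<phi>\<close>.\<close>

lemma class_seq_cong_frobenius:
  assumes j: "j < length Ks" and p: "prime p" and phi: "\<phi> \<in> frob_set L G p"
    and MB: "\<forall>\<tau>\<in>G. alg_int (of_int M * bcoef j \<tau>)"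
    and rat: "class_seq j p \<in> \<rat>"
  shows "\<exists>m::int. of_int M * (class_seq j p - class_ind j \<phi>) = of_nat p * of_int m"
proof -
  obtain P where f: "\<phi> \<in> G" "prime_ideal_of R P" "of_nat p \<in> P" "\<forall>x\<in>R. \<phi> x - x ^ p \<in> P"
    using phi unfolding frob_set_def by blast
  have I: "is_ideal R P" and one: "1 \<notin> P" using f(2) unfolding prime_ideal_of_iff by auto
  have MBR: "of_int M * bcoef j \<sigma> \<in> R" if "\<sigma> \<in> G" for \<sigma>
    using MB bcoef_in_L[OF j that] that by (auto simp: R_iff)
  have "of_int M * class_ind j \<phi> = of_int M * (\<Sum>\<sigma>\<in>G. (\<phi> \<circ> ginv \<sigma>) \<xi> * bcoef j \<sigma>)"
    using Gamma_bcoef[OF j f(1)] by simp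
  also have "\<dots> = (\<Sum>\<sigma>\<in>G. (\<phi> \<circ> ginv \<sigma>) \<xi> * (of_int M * bcoef j \<sigma>))"
    by (simp add: sum_distrib_left mult.left_commute)
  finally have "of_int M * class_ind j \<phi> = (\<Sum>\<sigma>\<in>G. (\<phi> \<circ> ginv \<sigma>) \<xi> * (of_int M * bcoef j \<sigma>))" .
  moreover have "of_int M * class_seq j p = (\<Sum>\<sigma>\<in>G. ginv \<sigma> \<xi> ^ p * (of_int M * bcoef j \<sigma>))"
    by (simp add: class_seq_def sum_distrib_left mult.left_commute)
  ultimately have y: "of_int M * (class_seq j p - class_ind j \<phi>) =
      (\<Sum>\<sigma>\<in>G. (ginv \<sigma> \<xi> ^ p - \<phi> (ginv \<sigma> \<xi>)) * (of_int M * bcoef j \<sigma>))"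
    by (simp add: right_diff_distrib left_diff_distrib sum_subtractf)
  have inP: "of_int M * (class_seq j p - class_ind j \<phi>) \<in> P"
    unfolding y
  proof (rule ideal_sum[OF I])
    fix \<sigma> assume s: "\<sigma> \<in> G"
    have "\<phi> (ginv \<sigma> \<xi>) - ginv \<sigma> \<xi> ^ p \<in> P" using f(4) R_conj[OF ginv_G[OF s]] by blast
    then have "ginv \<sigma> \<xi> ^ p - \<phi> (ginv \<sigma> \<xi>) \<in> P" using ideal_uminus[OF I] by force
    then show "(ginv \<sigma> \<xi> ^ p - \<phi> (ginv \<sigma> \<xi>)) * (of_int M * bcoef j \<sigma>) \<in> P"
      using ideal_mult_right[OF I] MBR[OF s] by blast
  qed
  moreover have "of_int M * (class_seq j p - class_ind j \<phi>) \<in> \<rat>" using rat by (simp add: class_ind_def)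
  ultimately have "of_int M * (class_seq j p - class_ind j \<phi>) \<in> \<int>"
    using ideal_subset[OF I] alg_int_Rats_imp_Ints by (auto simp: R_iff)
  then obtain Y where Y: "of_int M * (class_seq j p - class_ind j \<phi>) = of_int Y" by (auto elim: Ints_cases)
  then have "int p dvd Y" using prime_dvd_if_of_int_in_ideal[OF I p f(3) one] inP by simp
  then obtain m where "Y = int p * m" by (auto elim: dvdE)
  then show ?thesis using Y by auto
qed

text \<open>The set of Frobenius elements at \<open>p\<close> is stable under conjugation, so it either equals
  the class \<open>K\<^sub>j\<close>, or contains an element outside \<open>K\<^sub>j\<close>.\<close>

lemma frob_set_class_ind:
  assumes j: "j < length Ks" and ne: "frob_set L G p \<noteq> {}"
  shows "\<exists>\<phi>\<in>frob_set L G p. class_ind j \<phi> = (if frob_set L G p = Ks ! j then 1 else 0)"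
proof (cases "frob_set L G p = Ks ! j")
  case True
  then show ?thesis using ne by (auto simp: class_ind_def)
next
  case False
  have K: "Ks ! j \<in> conj_classes G" using Ks(2) j nth_mem by blast
  obtain \<phi>0 where phi0: "\<phi>0 \<in> frob_set L G p" using ne by blast
  show ?thesis
  proof (cases "\<phi>0 \<in> Ks ! j")
    case False
    then show ?thesis using phi0 \<open>frob_set L G p \<noteq> Ks ! j\<close> by (auto simp: class_ind_def)
  next
    case True
    have "Ks ! j \<subseteq> frob_set L G p"
    proof
      fix x assume "x \<in> Ks ! j"
      then obtain \<rho> where "\<rho> \<in> G" "x = \<rho> \<circ> \<phi>0 \<circ> ginv \<rho>" using conj_class_conjugate[OF K True] by blast
      then show "x \<in> frob_set L G p" using frob_set_conj[OF phi0] by blast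
    qed
    then obtain \<psi> where "\<psi> \<in> frob_set L G p" "\<psi> \<notin> Ks ! j" using \<open>frob_set L G p \<noteq> Ks ! j\<close> by blast
    then show ?thesis using \<open>frob_set L G p \<noteq> Ks ! j\<close> by (auto simp: class_ind_def)
  qed
qed

lemma frobenius_congruence:
  assumes j: "j < length Ks"
    and init: "\<forall>i < d. a i = (Pmat * the (mat_inverse Gamma) * kappa) $$ (i, j)"
    and rec: "\<forall>n. a (n + d) = - (\<Sum>k<d. of_int (coeff F k) * a (n + k))"
  shows "finite {p. prime p \<and> \<not> (\<exists>q. a p = of_rat q \<and> p_integral p q \<and>
                    rat_cong_p p q (if frob_set L G p = Ks ! j then 1 else 0))}"
proof -
  have a_eq: "a n = class_seq j n" for n
    using init rec class_seq_recurrence class_seq_initial[OF _ j]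
    by (intro linear_recurrence_unique[where d = d and c = "\<lambda>k. of_int (coeff F k)"]) auto
  have a_rat: "a n \<in> \<rat>" for n
    using init rec A_entry_Rats[OF _ j] A_entry[OF _ j]
    by (intro linear_recurrence_Rats[where d = d and c = "\<lambda>k. of_int (coeff F k)"]) auto
  obtain D where D0: "D \<noteq> 0" and DR: "\<forall>x\<in>R. \<exists>z::nat \<Rightarrow> int. of_int D * x = (\<Sum>i<d. of_int (z i) * \<xi> ^ i)"
    using ints_denominator by blast
  obtain M where M0: "M \<noteq> 0" and MB: "\<forall>\<tau>\<in>G. alg_int (of_int M * bcoef j \<tau>)"
    using bcoef_clear_denominator[OF j] by blast
  have good: "\<exists>q. a p = of_rat q \<and> p_integral p q \<and> rat_cong_p p q (if frob_set L G p = Ks ! j then 1 else 0)"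
    if p: "prime p" and pDM: "\<not> int p dvd D * M" for p
  proof -
    define c :: rat where "c = (if frob_set L G p = Ks ! j then 1 else 0)"
    have pD: "\<not> int p dvd D" and pM: "\<not> int p dvd M" using pDM by auto
    have "(of_rat c :: complex) = (if frob_set L G p = Ks ! j then 1 else 0)" by (simp add: c_def)
    then obtain \<phi> where \<phi>: "\<phi> \<in> frob_set L G p" "class_ind j \<phi> = of_rat c"
      using frob_set_class_ind[OF j frob_set_nonempty[OF p pD DR]] by auto
    obtain m where m: "of_int M * (a p - of_rat c) = of_nat p * of_int m"
      using class_seq_cong_frobenius[OF j p \<phi>(1) MB] a_rat a_eq \<phi>(2) by metis
    obtain q where q: "a p = of_rat q" using a_rat[of p] by (auto elim: Rats_cases)
    have "of_int M * (q - c) = of_nat p * of_int m"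
      using m unfolding q by (metis (mono_tags) of_rat_diff of_rat_eq_iff of_rat_mult of_rat_of_int_eq of_rat_of_nat_eq)
    moreover have "c \<in> \<int>" by (simp add: c_def)
    ultimately have "p_integral p q \<and> rat_cong_p p q c" by (intro rat_cong_p_if_scaled[OF p pM M0])
    then show ?thesis using q unfolding c_def by blast
  qed
  have "{p. prime p \<and> \<not> (\<exists>q. a p = of_rat q \<and> p_integral p q \<and>
                    rat_cong_p p q (if frob_set L G p = Ks ! j then 1 else 0))} \<subseteq> {..nat \<bar>D * M\<bar>}"
  proof
    fix p assume "p \<in> {p. prime p \<and> \<not> (\<exists>q. a p = of_rat q \<and> p_integral p q \<and>
                    rat_cong_p p q (if frob_set L G p = Ks ! j then 1 else 0))}"
    then have "int p dvd D * M" using good by blast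
    then have "int p \<le> \<bar>D * M\<bar>" using dvd_imp_le_int[of "D * M" "int p"] D0 M0 by simp
    then show "p \<in> {..nat \<bar>D * M\<bar>}" by simp
  qed
  then show ?thesis using finite_subset by blast
qed

end

theorem theorem1p1:
  fixes F :: "int poly" and \<xi> :: complex
    and gs :: "(complex \<Rightarrow> complex) list"
    and Ks :: "(complex \<Rightarrow> complex) set list"
  defines "d \<equiv> degree F"
  defines "L \<equiv> QQ_adj \<xi>"
  defines "G \<equiv> field_auts L"
  defines "P \<equiv> mat d d (\<lambda>(i, s). grp_inv G (gs ! s) (\<xi> ^ i))"
  defines "\<Gamma> \<equiv> mat d d (\<lambda>(s, t). (gs ! s \<circ> grp_inv G (gs ! t)) \<xi>)"
  defines "\<kappa> \<equiv> mat d (length Ks) (\<lambda>(t, j). if gs ! t \<in> Ks ! j then 1 else 0)"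
  defines "A \<equiv> P * the (mat_inverse \<Gamma>) * \<kappa>"
  assumes monic: "lead_coeff F = 1"
    and irred: "irreducible F"
    and root: "poly (map_poly of_int F) \<xi> = 0"
    and galois: "card G = d"
    and normal_indep: "\<forall>c :: (complex \<Rightarrow> complex) \<Rightarrow> rat.
                         (\<Sum>\<sigma>\<in>G. of_rat (c \<sigma>) * \<sigma> \<xi>) = 0 \<longrightarrow> (\<forall>\<sigma>\<in>G. c \<sigma> = 0)"
    and normal_span: "\<forall>x\<in>L. \<exists>c :: (complex \<Rightarrow> complex) \<Rightarrow> rat. x = (\<Sum>\<sigma>\<in>G. of_rat (c \<sigma>) * \<sigma> \<xi>)"
    and gs: "distinct gs" "set gs = G"
    and Ks: "distinct Ks" "set Ks = conj_classes G"
  shows "invertible_mat \<Gamma>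
     \<and> (\<forall>i < d. \<forall>j < length Ks. A $$ (i, j) \<in> \<rat>)
     \<and> (\<forall>j < length Ks. \<forall>a :: nat \<Rightarrow> complex.
          (\<forall>i < d. a i = A $$ (i, j)) \<and>
          (\<forall>n. a (n + d) = - (\<Sum>k<d. of_int (coeff F k) * a (n + k))) \<longrightarrow>
          finite {p. prime p \<and> \<not> (\<exists>q. a p = of_rat q \<and> p_integral p q \<and>
                    rat_cong_p p q (if frob_set L G p = Ks ! j then 1 else 0))})"
proof -
  have loc: "class_matrices F \<xi> gs Ks"
    unfolding class_matrices_def class_matrices_axioms_def normal_basis_field_def
    using monic root galois normal_indep normal_span gs Ks unfolding G_def L_def d_def by blast
  note invertible = class_matrices.invertible_Gamma[OF loc]
  note entries = class_matrices.A_entry[OF loc] class_matrices.A_entry_Rats[OF loc]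
  note congruence = class_matrices.frobenius_congruence[OF loc]
  show ?thesis
    unfolding A_def P_def \<Gamma>_def \<kappa>_def G_def L_def d_def
    using invertible entries congruence by auto
qed

end
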